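(* Let $m\ge1$, $C_m$ cyclic with generator $c$, and consider the absolute Wedderburn embedding $\omega_{\mathbb{Z},m}\colon\mathbb{Z}C_m\to\prod_{d\mid m}\mathbb{Z}[\zeta_d]$, $c\mapsto(\zeta_d)_{d\mid m}$. Its index (the order of its cokernel) is \[ \prod_{p\mid m}p^{\frac{m[p]-1}{p-1}\cdot m[p']}, \] the product running over the primes $p$ dividing $m$.
   Context: $\zeta_d$ is a primitive $d$th root of unity. For a prime $p$, $m[p]:=p^{v_p(m)}$ is the $p$-part of $m$ and $m[p']:=m/m[p]$ its $p'$-part. *)

theory Defs
  imports Complex_Main "HOL-Computational_Algebra.Computational_Algebra"
begin

definition zeta :: "nat \<Rightarrow> complex" where
  "zeta d = cis (2 * pi / real d)"

definition int_cyclotomic_ring :: "nat \<Rightarrow> complex set" where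
  "int_cyclotomic_ring d = {poly (map_poly of_int p) (zeta d) | p :: int poly. True}"

text \<open>The product of Z[zeta_d] over d dividing m, as functions on indices d
  (zero outside the divisors of m).\<close>
definition wedderburn_target :: "nat \<Rightarrow> (nat \<Rightarrow> complex) set" where
  "wedderburn_target m = {f. (\<forall>d. d dvd m \<longrightarrow> f d \<in> int_cyclotomic_ring d)
                             \<and> (\<forall>d. \<not> d dvd m \<longrightarrow> f d = 0)}"

text \<open>The absolute Wedderburn map: the element sum_{k<m} a_k c^k of Z C_m
  (given by its coefficients a_0, ..., a_(m-1)) goes to (sum_k a_k zeta_d^k)_{d | m}.\<close>
definition wedderburn_map :: "nat \<Rightarrow> (nat \<Rightarrow> int) \<Rightarrow> nat \<Rightarrow> complex" where
  "wedderburn_map m a = (\<lambda>d. if d dvd m then (\<Sum>k<m. of_int (a k) * zeta d ^ k) else 0)"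

definition wedderburn_image :: "nat \<Rightarrow> (nat \<Rightarrow> complex) set" where
  "wedderburn_image m = range (wedderburn_map m)"

text \<open>Order of the cokernel: number of cosets x + image, x in the target.\<close>
definition wedderburn_index :: "nat \<Rightarrow> nat" where
  "wedderburn_index m =
     card ((\<lambda>x. (\<lambda>y. \<lambda>d. x d + y d) ` wedderburn_image m) ` wedderburn_target m)"

definition p_part :: "nat \<Rightarrow> nat \<Rightarrow> nat" where
  "p_part p m = p ^ multiplicity p m"

end

theory Submission
  imports Defs "HOL-Number_Theory.Totient" "HOL-Library.Function_Algebras"
begin

text \<open>View \<open>\<int>C\<^sub>m\<close> as \<open>\<int>[X]/(X\<^sup>m - 1)\<close> and, for a finite set \<open>B\<close> of orders, let \<open>\<omega>\<^sub>B\<close> evaluate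
  \<open>g \<in> \<int>[X]\<close> at all \<open>\<zeta>\<^sub>d\<close>, \<open>d \<in> B\<close>. Its kernel is generated by \<open>\<Phi>\<^sub>B = \<Prod>\<^sub>d\<^sub>\<in>\<^sub>B \<Phi>\<^sub>d\<close>, the \<open>\<Phi>\<^sub>d\<close> being
  irreducible of degree \<open>\<phi>(d)\<close> by Dedekind's argument. Take \<open>B = k \<cdot> {e. e | n}\<close> with \<open>k\<close> coprime to
  \<open>n = q\<^sup>c\<^sup>+\<^sup>1 n'\<close>, \<open>q\<close> prime, \<open>q \<nmid> n'\<close>. Then \<open>B\<close> is the disjoint union of \<open>B\<^sub>1 = k \<cdot> {e. e | n/q}\<close> and
  \<open>B\<^sub>2 = k q\<^sup>c\<^sup>+\<^sup>1 \<cdot> {e. e | n'}\<close>, and \<open>\<Phi>\<^sub>B\<^sub>1 \<Phi>\<^sub>B\<^sub>2 = \<Phi>\<^sub>B = \<Phi>\<^sub>B\<^sub>1(X\<^sup>q) \<equiv> \<Phi>\<^sub>B\<^sub>1\<^sup>q (mod q)\<close>, so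
  \<open>\<Phi>\<^sub>B\<^sub>2 \<equiv> \<Phi>\<^sub>B\<^sub>1\<^sup>q\<^sup>-\<^sup>1 (mod q)\<close>; moreover \<open>q \<in> (\<Phi>\<^sub>B\<^sub>1, \<Phi>\<^sub>B\<^sub>2)\<close>. Hence the image of \<open>\<omega>\<^sub>B\<close> has index
  \<open>|\<int>[X]/(\<Phi>\<^sub>B\<^sub>1, q)| = q ^ (\<phi>(k) n/q)\<close> in \<open>\<omega>\<^sub>B\<^sub>1(\<int>[X]) + \<omega>\<^sub>B\<^sub>2(\<int>[X])\<close>, whose index in \<open>\<Prod>\<^sub>d\<^sub>\<in>\<^sub>B \<int>[\<zeta>\<^sub>d]\<close>
  is the product of the indices for \<open>B\<^sub>1\<close> and \<open>B\<^sub>2\<close>. By induction on \<open>n\<close>, the index for \<open>B\<close> is the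
  \<open>\<phi>(k)\<close>-th power of the claimed formula for \<open>n\<close>, which satisfies the same recursion; take \<open>k = 1\<close>.\<close>

section \<open>Index of a subgroup of an abelian group\<close>

definition add_subgroup :: "'a::ab_group_add set \<Rightarrow> bool" where
  "add_subgroup H \<longleftrightarrow> 0 \<in> H \<and> (\<forall>x\<in>H. \<forall>y\<in>H. x + y \<in> H \<and> x - y \<in> H)"

definition add_coset :: "'a::ab_group_add set \<Rightarrow> 'a \<Rightarrow> 'a set" where
  "add_coset H x = (\<lambda>y. x + y) ` H"

definition subgroup_index :: "'a::ab_group_add set \<Rightarrow> 'a set \<Rightarrow> nat" where
  "subgroup_index G H = card (add_coset H ` G)"

lemma add_coset_eq_iff:
  assumes "add_subgroup H"
  shows "add_coset H x = add_coset H y \<longleftrightarrow> x - y \<in> H"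
proof
  assume eq: "add_coset H x = add_coset H y"
  have "x \<in> add_coset H x"
    using assms unfolding add_coset_def add_subgroup_def by force
  then obtain h where "h \<in> H" "x = y + h"
    using eq unfolding add_coset_def by auto
  then show "x - y \<in> H" by simp
next
  assume xy: "x - y \<in> H"
  have "x + h \<in> add_coset H y" "y + h \<in> add_coset H x" if "h \<in> H" for h
  proof -
    have "(x - y) + h \<in> H" "h - (x - y) \<in> H"
      using assms xy that unfolding add_subgroup_def by auto
    moreover have "x + h = y + ((x - y) + h)" "y + h = x + (h - (x - y))"
      by simp_all
    ultimately show "x + h \<in> add_coset H y" "y + h \<in> add_coset H x"
      unfolding add_coset_def by (metis image_eqI)+
  qed
  then show "add_coset H x = add_coset H y"
    unfolding add_coset_def by blast
qed

lemma add_coset_self: "add_subgroup H \<Longrightarrow> x \<in> H \<Longrightarrow> add_coset H x = H"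
  using add_coset_eq_iff[of H x 0] by (simp add: add_coset_def)

lemma add_coset_eq_if_mem:
  assumes "add_subgroup H" "x \<in> add_coset H a"
  shows "add_coset H x = add_coset H a"
  using assms(2) add_coset_eq_iff[OF assms(1)] by (auto simp: add_coset_def)

lemma card_image_eq_if_same_fibres:
  assumes "\<And>u v. u \<in> P \<Longrightarrow> v \<in> P \<Longrightarrow> f u = f v \<longleftrightarrow> g u = g v"
  shows "card (f ` P) = card (g ` P)"
proof -
  define h where "h = (\<lambda>y. f (inv_into P g y))"
  have "h (g u) = f u" if "u \<in> P" for u
    using assms[of "inv_into P g (g u)" u] that unfolding h_def
    by (simp add: inv_into_into f_inv_into_f)
  then have "f ` P = h ` g ` P"
    by (force simp: image_comp)
  moreover have "inj_on h (g ` P)"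
  proof (rule inj_onI)
    fix a b assume "a \<in> g ` P" "b \<in> g ` P" "h a = h b"
    then show "a = b"
      using assms[of "inv_into P g a" "inv_into P g b"] unfolding h_def
      by (auto simp: inv_into_into f_inv_into_f)
  qed
  ultimately show ?thesis by (simp add: card_image)
qed

lemma subgroup_index_eq_card_image:
  assumes H: "add_subgroup H" and G: "G = \<psi> ` P"
    and fibres: "\<And>u v. u \<in> P \<Longrightarrow> v \<in> P \<Longrightarrow> \<psi> u - \<psi> v \<in> H \<longleftrightarrow> \<chi> u = \<chi> v"
  shows "subgroup_index G H = card (\<chi> ` P)"
proof -
  have "subgroup_index G H = card ((\<lambda>u. add_coset H (\<psi> u)) ` P)"
    unfolding subgroup_index_def G by (simp add: image_comp comp_def)
  also have "\<dots> = card (\<chi> ` P)"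
    by (rule card_image_eq_if_same_fibres) (simp add: add_coset_eq_iff[OF H] fibres)
  finally show ?thesis .
qed

lemma bij_betw_translate_add_cosets:
  "bij_betw (\<lambda>Z. (\<lambda>y. a + y) ` Z) (add_coset H ` K) (add_coset H ` add_coset K a)"
proof (rule bij_betw_imageI)
  show "inj_on (\<lambda>Z. (\<lambda>y. a + y) ` Z) (add_coset H ` K)"
  proof (rule inj_onI)
    fix U V :: "'a set" assume "(\<lambda>y. a + y) ` U = (\<lambda>y. a + y) ` V"
    then have "(\<lambda>y. - a + y) ` (\<lambda>y. a + y) ` U = (\<lambda>y. - a + y) ` (\<lambda>y. a + y) ` V"
      by simp
    then show "U = V" by (simp add: image_image)
  qed
  show "(\<lambda>Z. (\<lambda>y. a + y) ` Z) ` add_coset H ` K = add_coset H ` add_coset K a"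
    unfolding add_coset_def by (auto simp: image_image add.assoc)
qed

lemma disjoint_add_cosets_in_add_cosets:
  assumes K: "add_subgroup K" and H: "add_subgroup H" and "H \<subseteq> K"
    and Y: "Y1 \<in> add_coset K ` G" "Y2 \<in> add_coset K ` G" "Y1 \<noteq> Y2"
  shows "add_coset H ` Y1 \<inter> add_coset H ` Y2 = {}"
proof (rule ccontr)
  assume "add_coset H ` Y1 \<inter> add_coset H ` Y2 \<noteq> {}"
  then obtain x y where xy: "x \<in> Y1" "y \<in> Y2" "add_coset H x = add_coset H y"
    by auto
  have "Y1 = add_coset K x" "Y2 = add_coset K y"
    using Y(1,2) xy(1,2) add_coset_eq_if_mem[OF K] by auto
  moreover have "x - y \<in> K"
    using xy(3) add_coset_eq_iff[OF H] \<open>H \<subseteq> K\<close> by auto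
  ultimately show False
    using Y(3) add_coset_eq_iff[OF K] by simp
qed

lemma subgroup_index_tower:
  assumes G: "add_subgroup G" and K: "add_subgroup K" and H: "add_subgroup H"
    and "H \<subseteq> K" "K \<subseteq> G"
    and fin: "finite (add_coset K ` G)" "finite (add_coset H ` K)"
  shows "subgroup_index G H = subgroup_index G K * subgroup_index K H"
proof -
  have "x \<in> add_coset K x" for x
    using K unfolding add_coset_def add_subgroup_def by force
  moreover have "add_coset K a \<subseteq> G" if "a \<in> G" for a
    using G that \<open>K \<subseteq> G\<close> unfolding add_coset_def add_subgroup_def by auto
  ultimately have cover: "add_coset H ` G = (\<Union>Y\<in>add_coset K ` G. add_coset H ` Y)"
    by blast
  have piece: "card (add_coset H ` Y) = subgroup_index K H"
    and "finite (add_coset H ` Y)" if Y: "Y \<in> add_coset K ` G" for Y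
  proof -
    obtain a where "Y = add_coset K a" using Y by blast
    then have "bij_betw (\<lambda>Z. (\<lambda>y. a + y) ` Z) (add_coset H ` K) (add_coset H ` Y)"
      by (simp add: bij_betw_translate_add_cosets)
    then show "card (add_coset H ` Y) = subgroup_index K H" "finite (add_coset H ` Y)"
      using fin(2) unfolding subgroup_index_def by (auto simp: bij_betw_same_card bij_betw_finite)
  qed
  then have "card (add_coset H ` G) = (\<Sum>Y\<in>add_coset K ` G. card (add_coset H ` Y))"
    unfolding cover using disjoint_add_cosets_in_add_cosets[OF K H \<open>H \<subseteq> K\<close>]
    by (intro card_UN_disjoint fin(1)) auto
  then show ?thesis
    using piece by (simp add: subgroup_index_def)
qed

section \<open>Integer polynomials at complex points\<close>

definition ipoly :: "int poly \<Rightarrow> complex \<Rightarrow> complex" where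
  "ipoly g z = poly (map_poly of_int g) z"

lemma map_poly_of_int_add:
  "map_poly (of_int :: int \<Rightarrow> 'a::ring_1) (f + g) = map_poly of_int f + map_poly of_int g"
  by (rule poly_eqI) (simp add: coeff_map_poly)

lemma map_poly_of_int_diff:
  "map_poly (of_int :: int \<Rightarrow> 'a::ring_1) (f - g) = map_poly of_int f - map_poly of_int g"
  by (rule poly_eqI) (simp add: coeff_map_poly)

lemma map_poly_of_int_mult:
  "map_poly (of_int :: int \<Rightarrow> 'a::comm_ring_1) (f * g) = map_poly of_int f * map_poly of_int g"
  by (rule poly_eqI) (simp add: coeff_map_poly coeff_mult)

lemma ipoly_0 [simp]: "ipoly 0 z = 0"
  by (simp add: ipoly_def)

lemma ipoly_1 [simp]: "ipoly 1 z = 1"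
  by (simp add: ipoly_def)

lemma ipoly_add [simp]: "ipoly (f + g) z = ipoly f z + ipoly g z"
  by (simp add: ipoly_def map_poly_of_int_add)

lemma ipoly_diff [simp]: "ipoly (f - g) z = ipoly f z - ipoly g z"
  by (simp add: ipoly_def map_poly_of_int_diff)

lemma ipoly_mult [simp]: "ipoly (f * g) z = ipoly f z * ipoly g z"
  by (simp add: ipoly_def map_poly_of_int_mult)

lemma ipoly_pCons [simp]: "ipoly (pCons a f) z = of_int a + z * ipoly f z"
  by (simp add: ipoly_def map_poly_pCons)

lemma ipoly_const [simp]: "ipoly [:c:] z = of_int c"
  by simp

lemma ipoly_smult [simp]: "ipoly (smult c f) z = of_int c * ipoly f z"
  by (simp add: ipoly_def map_poly_smult)

lemma ipoly_monom [simp]: "ipoly (monom c n) z = of_int c * z ^ n"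
  by (simp add: ipoly_def map_poly_monom poly_monom)

lemma ipoly_power [simp]: "ipoly (f ^ n) z = ipoly f z ^ n"
  by (induction n) auto

lemma ipoly_sum: "ipoly (\<Sum>i\<in>A. f i) z = (\<Sum>i\<in>A. ipoly (f i) z)"
  by (induction A rule: infinite_finite_induct) auto

lemma ipoly_pcompose: "ipoly (pcompose f g) z = ipoly f (ipoly g z)"
  by (induction f) (auto simp: pcompose_pCons)

lemma ipoly_dvd_eq_0: "f dvd g \<Longrightarrow> ipoly f z = 0 \<Longrightarrow> ipoly g z = 0"
  by (auto elim!: dvdE)

lemma int_poly_eq_smult_if_dvd_coeffs:
  fixes X :: "int poly"
  assumes "\<forall>i. q dvd coeff X i"
  shows "\<exists>Y. X = smult q Y"
proof -
  have "X = smult q (map_poly (\<lambda>c. c div q) X)"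
    by (rule poly_eqI) (use assms in \<open>simp add: coeff_map_poly\<close>)
  then show ?thesis by blast
qed

text \<open>Otherwise the leading coefficient of \<open>X mod q\<close> would survive in \<open>f * X\<close>, as \<open>f\<close> is monic.\<close>

lemma dvd_coeffs_if_monic_mult:
  fixes f X :: "int poly"
  assumes monic: "lead_coeff f = 1" and high: "\<forall>i\<ge>degree f. q dvd coeff (f * X) i"
  shows "\<forall>i. q dvd coeff X i"
proof -
  define R where "R = map_poly (\<lambda>c. c mod q) X"
  define Y where "Y = map_poly (\<lambda>c. c div q) X"
  have X: "X = smult q Y + R"
    unfolding R_def Y_def by (rule poly_eqI) (simp add: coeff_map_poly)
  have "R = 0"
  proof (rule ccontr)
    assume "R \<noteq> 0"
    have "coeff (f * R) (degree f + degree R) = lead_coeff R"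
      using monic by (simp add: coeff_mult_degree_sum)
    moreover have "coeff (f * X) (degree f + degree R)
        = q * coeff (f * Y) (degree f + degree R) + coeff (f * R) (degree f + degree R)"
      unfolding X by (simp add: distrib_left)
    ultimately have "q dvd lead_coeff R"
      using high by (metis dvd_add_right_iff dvd_triv_left le_add1)
    moreover have "lead_coeff R = lead_coeff R mod q"
      unfolding R_def by (simp add: coeff_map_poly)
    ultimately show False
      using \<open>R \<noteq> 0\<close> by (metis dvd_eq_mod_eq_0 leading_coeff_0_iff)
  qed
  then show ?thesis
    unfolding X by simp
qed

lemma monic_dvd_smult_minus_const_imp_dvd:
  fixes \<mu> h G :: "int poly"
  assumes monic: "lead_coeff \<mu> = 1" and deg: "degree \<mu> \<ge> 1"
    and eq: "\<mu> * h = smult p G - [:c:]"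
  shows "p dvd c"
proof -
  have "\<forall>i\<ge>degree \<mu>. p dvd coeff (\<mu> * h) i"
    using deg unfolding eq by (auto simp: coeff_pCons split: nat.split)
  then have "p dvd coeff h 0"
    using dvd_coeffs_if_monic_mult[OF monic] by blast
  then have "p dvd coeff (\<mu> * h) 0"
    by (simp add: coeff_mult)
  then have "p dvd p * coeff G 0 - c"
    unfolding eq by simp
  then show "p dvd c"
    by (metis dvd_diff_right_iff dvd_triv_left)
qed

section \<open>Frobenius congruence for integer polynomials\<close>

lemma add_power_prime_eq:
  fixes a b :: "'a::comm_ring_1"
  assumes p: "prime p"
  shows "\<exists>r. (a + b) ^ p = a ^ p + b ^ p + of_nat p * r"
proof -
  have p1: "p \<ge> 1" using p prime_ge_1_nat by blast
  define f where "f k = of_nat (p choose k) * a ^ k * b ^ (p - k)" for k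
  have "f k = of_nat p * (of_nat ((p choose k) div p) * a ^ k * b ^ (p - k))" if "k \<in> {1..<p}" for k
  proof -
    have "p dvd (p choose k)" using that p by (intro dvd_choose_prime) auto
    then have "(of_nat (p choose k) :: 'a) = of_nat p * of_nat ((p choose k) div p)"
      by (metis dvd_mult_div_cancel of_nat_mult)
    then show ?thesis unfolding f_def by (simp add: mult.assoc)
  qed
  then have middle: "(\<Sum>k\<in>{1..<p}. f k) = of_nat p * (\<Sum>k\<in>{1..<p}. of_nat ((p choose k) div p) * a ^ k * b ^ (p - k))"
    by (simp add: sum_distrib_left)
  have "{..p} = insert 0 (insert p {1..<p})" using p1 by auto
  then have "(a + b) ^ p = f 0 + f p + (\<Sum>k\<in>{1..<p}. f k)"
    using p1 unfolding binomial_ring f_def[symmetric] by (simp add: add.assoc)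
  also have "f 0 + f p = a ^ p + b ^ p"
    unfolding f_def by simp
  finally show ?thesis
    unfolding middle by blast
qed

lemma prime_dvd_power_prime_minus_self_nat:
  assumes p: "prime p"
  shows "int p dvd int n ^ p - int n"
proof (induction n)
  case 0
  then show ?case using prime_gt_0_nat[OF p] by (simp add: zero_power)
next
  case (Suc n)
  obtain r where r: "(int n + 1) ^ p = int n ^ p + 1 ^ p + of_nat p * r"
    using add_power_prime_eq[OF p] by blast
  have "int (Suc n) ^ p - int (Suc n) = (int n ^ p - int n) + int p * r"
    using r by (simp add: add.commute)
  then show ?case using Suc.IH by (metis dvd_add dvd_triv_left)
qed

lemma prime_dvd_power_prime_minus_self:
  fixes a :: int
  assumes p: "prime p"
  shows "int p dvd a ^ p - a"
proof -
  define r where "r = a mod int p"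
  have "r \<ge> 0" using p unfolding r_def by (simp add: prime_gt_0_nat)
  then have "int p dvd r ^ p - r"
    using prime_dvd_power_prime_minus_self_nat[OF p, of "nat r"] by simp
  moreover have "int p dvd a - r"
    unfolding r_def by (simp add: minus_mod_eq_mult_div)
  then have "int p dvd a ^ p - r ^ p"
    unfolding power_diff_sumr2[of a p r] by (rule dvd_mult2)
  moreover have "a ^ p - a = (a ^ p - r ^ p) + (r ^ p - r) - (a - r)" by simp
  ultimately show ?thesis
    using \<open>int p dvd a - r\<close> by (metis dvd_add dvd_diff)
qed

lemma int_poly_power_prime_eq:
  fixes f :: "int poly"
  assumes p: "prime p"
  shows "\<exists>r. f ^ p = pcompose f (monom 1 p) + smult (int p) r"
proof (induction f)
  case 0
  show ?case using prime_gt_0_nat[OF p] by (intro exI[of _ 0]) simp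
next
  case (pCons a g)
  obtain r0 where r0: "g ^ p = pcompose g (monom 1 p) + smult (int p) r0"
    using pCons(2) by blast
  obtain r1 where r1: "([:a:] + monom 1 1 * g) ^ p = [:a:] ^ p + (monom 1 1 * g) ^ p + of_nat p * r1"
    using add_power_prime_eq[OF p] by blast
  obtain c where c: "a ^ p - a = int p * c"
    using prime_dvd_power_prime_minus_self[OF p, of a] by (auto elim: dvdE)
  have "[:a:] ^ p = [:a:] + smult (int p) [:c:]"
    using c by (simp add: poly_const_pow algebra_simps)
  moreover have "(monom 1 1 * g) ^ p = monom 1 p * g ^ p"
    by (simp add: power_mult_distrib monom_power)
  moreover have "pCons a g = [:a:] + monom 1 1 * g"
    by (simp add: monom_Suc)
  ultimately have "pCons a g ^ p = [:a:] + monom 1 p * pcompose g (monom 1 p)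
      + smult (int p) ([:c:] + monom 1 p * r0 + r1)"
    using r1 unfolding r0 by (simp add: of_nat_poly smult_add_right algebra_simps)
  moreover have "pcompose (pCons a g) (monom 1 p) = [:a:] + monom 1 p * pcompose g (monom 1 p)"
    by (simp add: pcompose_pCons)
  ultimately show ?case by auto
qed

section \<open>Roots of unity\<close>

lemma zeta_power: "zeta d ^ k = cis (2 * pi * real k / real d)"
  unfolding zeta_def DeMoivre by (rule arg_cong[where f=cis]) (simp add: field_simps)

lemma zeta_nonzero [simp]: "zeta d \<noteq> 0"
  by (simp add: zeta_def)

lemma zeta_power_eq_1_iff:
  assumes d: "d > 0"
  shows "zeta d ^ k = 1 \<longleftrightarrow> d dvd k"
proof
  assume "zeta d ^ k = 1"
  then have "cos (2 * pi * real k / real d) = 1"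
    unfolding zeta_power by (metis cis.sel(1) one_complex.sel(1))
  then obtain n :: int where "2 * pi * real k / real d = real_of_int n * 2 * pi"
    using cos_one_2pi_int by blast
  then have "real k = real_of_int n * real d"
    using d by (simp add: field_simps)
  then have "int k = n * int d"
    by (metis of_int_eq_iff of_int_mult of_int_of_nat_eq)
  then show "d dvd k"
    by (metis dvd_triv_right int_dvd_int_iff)
next
  assume "d dvd k"
  then obtain t where "k = d * t" by auto
  then have "2 * pi * real k / real d = 2 * pi * real t"
    using d by (simp add: field_simps)
  then show "zeta d ^ k = 1"
    unfolding zeta_power by simp
qed

lemma zeta_power_self: "d > 0 \<Longrightarrow> zeta d ^ d = 1"
  using zeta_power_eq_1_iff by simp

lemma zeta_1: "zeta 1 = 1"
  using zeta_power_self[of 1] by simp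

lemma zeta_power_eq_iff:
  assumes d: "d > 0"
  shows "zeta d ^ i = zeta d ^ j \<longleftrightarrow> i mod d = j mod d"
proof -
  have *: "zeta d ^ i = zeta d ^ j \<longleftrightarrow> i mod d = j mod d" if ij: "i \<le> j" for i j
  proof -
    have "zeta d ^ j = zeta d ^ i * zeta d ^ (j - i)"
      using ij by (simp flip: power_add)
    then have "zeta d ^ i = zeta d ^ j \<longleftrightarrow> zeta d ^ (j - i) = 1"
      by auto
    also have "\<dots> \<longleftrightarrow> d dvd j - i"
      using zeta_power_eq_1_iff[OF d] by simp
    also have "\<dots> \<longleftrightarrow> i mod d = j mod d"
      using mod_eq_dvd_iff_nat[OF ij, of d] by auto
    finally show ?thesis .
  qed
  show ?thesis
  proof (cases "i \<le> j")
    case False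
    then show ?thesis using *[of j i] by auto
  qed (use * in simp)
qed

lemma zeta_mult_power: "a > 0 \<Longrightarrow> b > 0 \<Longrightarrow> zeta (a * b) ^ a = zeta b"
  unfolding zeta_power by (simp add: zeta_def field_simps)

definition xpow_minus_one :: "nat \<Rightarrow> int poly" where
  "xpow_minus_one d = monom 1 d - 1"

lemma ipoly_xpow_minus_one [simp]: "ipoly (xpow_minus_one d) z = z ^ d - 1"
  unfolding xpow_minus_one_def by simp

lemma degree_xpow_minus_one:
  assumes "d > 0"
  shows "degree (xpow_minus_one d) = d"
proof -
  have "degree (xpow_minus_one d) \<le> d"
    unfolding xpow_minus_one_def by (rule degree_diff_le) (simp_all add: degree_monom_le)
  moreover have "coeff (xpow_minus_one d) d = 1"
    unfolding xpow_minus_one_def using assms by simp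
  ultimately show ?thesis
    by (metis le_antisym le_degree one_neq_zero)
qed

lemma lead_coeff_xpow_minus_one:
  assumes "d > 0"
  shows "lead_coeff (xpow_minus_one d) = 1"
  using assms by (simp add: degree_xpow_minus_one) (simp add: xpow_minus_one_def)

section \<open>Irreducible integer polynomials with a prescribed complex root\<close>

lemma degree_pos_if_ipoly_eq_0:
  assumes "g \<noteq> 0" "ipoly g z = 0"
  shows "degree g > 0"
proof (rule ccontr)
  assume "\<not> degree g > 0"
  then have "g = [:coeff g 0:]"
    by (metis degree_0_id gr0I)
  then show False
    using assms by (metis ipoly_const of_int_eq_0_iff pCons_0_0)
qed

lemma exists_prime_factor_vanishing:
  fixes g :: "int poly"
  shows "g \<noteq> 0 \<Longrightarrow> ipoly g z = 0 \<Longrightarrow> \<exists>\<mu>. prime \<mu> \<and> \<mu> dvd g \<and> ipoly \<mu> z = 0"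
proof (induction g rule: prime_divisors_induct)
  case (unit x)
  then show ?case
    using degree_pos_if_ipoly_eq_0 by (fastforce simp: is_unit_poly_iff)
next
  case (factor p x)
  then show ?case
    by (cases "ipoly p z = 0") (auto intro: dvd_mult)
qed simp

lemma exists_monic_prime_factor_vanishing:
  assumes monic: "lead_coeff g = 1" and root: "ipoly g z = 0"
  shows "\<exists>\<mu>. prime \<mu> \<and> lead_coeff \<mu> = 1 \<and> \<mu> dvd g \<and> ipoly \<mu> z = 0"
proof -
  obtain \<mu> where \<mu>: "prime \<mu>" "\<mu> dvd g" "ipoly \<mu> z = 0"
    using exists_prime_factor_vanishing[of g z] monic root by fastforce
  obtain s where "g = \<mu> * s"
    using \<mu>(2) by blast
  then have "lead_coeff \<mu> * lead_coeff s = 1"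
    using monic by (simp add: lead_coeff_mult)
  then have "lead_coeff \<mu> dvd 1"
    by (metis dvd_triv_left)
  moreover have "unit_factor \<mu> = 1" "\<mu> \<noteq> 0"
    using \<mu>(1) by (auto simp: unit_factor_prime)
  then have "sgn (lead_coeff \<mu>) = 1"
    by (simp add: unit_factor_poly_def one_pCons)
  then have "lead_coeff \<mu> > 0"
    by (simp add: sgn_1_pos)
  ultimately have "lead_coeff \<mu> = 1"
    by (simp add: zdvd1_eq)
  then show ?thesis
    using \<mu> by blast
qed

lemma vanishing_min_degree_divides_multiple:
  assumes h: "h \<noteq> 0" "ipoly h z = 0"
    and min: "\<And>g. g \<noteq> 0 \<Longrightarrow> ipoly g z = 0 \<Longrightarrow> degree h \<le> degree g"
    and f: "ipoly f z = 0"
  shows "\<exists>c k. c \<noteq> 0 \<and> smult c f = h * k"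
proof -
  obtain c k where ck: "c \<noteq> 0" "smult c f = h * k + pseudo_mod f h"
    using pseudo_mod(1)[OF h(1)] by blast
  have "ipoly (pseudo_mod f h) z = 0"
    using arg_cong[OF ck(2), of "\<lambda>g. ipoly g z"] h f by simp
  then have "pseudo_mod f h = 0"
    using min pseudo_mod(2)[OF h(1), of f] by fastforce
  then show ?thesis
    using ck by auto
qed

text \<open>A nonzero \<open>h\<close> of least degree vanishing at \<open>z\<close> divides a constant multiple of every
  polynomial vanishing at \<open>z\<close>; the prime \<open>\<mu>\<close> therefore divides \<open>h\<close>, and then \<open>g\<close>.\<close>

lemma prime_elem_vanishing_dvd:
  fixes \<mu> g :: "int poly"
  assumes \<mu>: "prime_elem \<mu>" "ipoly \<mu> z = 0" and g: "ipoly g z = 0"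
  shows "\<mu> dvd g"
proof -
  have "\<mu> \<noteq> 0" using \<mu>(1) by auto
  then obtain h where h: "h \<noteq> 0 \<and> ipoly h z = 0"
    and min: "\<And>g. g \<noteq> 0 \<Longrightarrow> ipoly g z = 0 \<Longrightarrow> degree h \<le> degree g"
    using ex_has_least_nat[of "\<lambda>g. g \<noteq> 0 \<and> ipoly g z = 0" \<mu> degree] \<mu>(2) by blast
  have multiple: "\<exists>c k. c \<noteq> 0 \<and> smult c f = h * k" if "ipoly f z = 0" for f
    using vanishing_min_degree_divides_multiple[of h z f] h min that by blast
  have not_dvd_const: "\<not> \<mu> dvd [:c:]" if "c \<noteq> 0" for c
    using degree_pos_if_ipoly_eq_0[OF \<open>\<mu> \<noteq> 0\<close> \<mu>(2)] dvd_imp_degree_le[of \<mu> "[:c:]"] that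
    by auto
  obtain c s where cs: "c \<noteq> 0" "smult c \<mu> = h * s"
    using multiple[OF \<mu>(2)] by blast
  have "\<not> \<mu> dvd s"
  proof
    assume "\<mu> dvd s"
    then obtain t where "s = \<mu> * t" by blast
    then have "([:c:] - h * t) * \<mu> = 0"
      using cs(2) by (simp add: algebra_simps)
    then have "h dvd [:c:]"
      using \<open>\<mu> \<noteq> 0\<close> by (simp add: eq_iff_diff_eq_0[symmetric])
    then show False
      using degree_pos_if_ipoly_eq_0[of h z] h cs(1) dvd_imp_degree_le[of h "[:c:]"] by auto
  qed
  moreover have "\<mu> dvd h * s"
    using cs(2) by (metis dvd_smult dvd_refl)
  ultimately have "\<mu> dvd h"
    using \<mu>(1) prime_elem_dvd_mult_iff by blast
  moreover obtain c' k where "c' \<noteq> 0" "smult c' g = h * k"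
    using multiple[OF g] by blast
  ultimately have "\<mu> dvd [:c':] * g" "\<not> \<mu> dvd [:c':]"
    using not_dvd_const by (auto simp: dvd_mult2)
  then show ?thesis
    using \<mu>(1) prime_elem_dvd_mult_iff by blast
qed

section \<open>Cyclotomic polynomials\<close>

text \<open>The minimal polynomial of \<open>\<zeta>\<^sub>d\<close> over \<open>\<int>\<close>. Dedekind's argument below shows that it vanishes at
  all primitive \<open>d\<close>-th roots of unity, so it is the cyclotomic polynomial \<open>\<Phi>\<^sub>d\<close>.\<close>

definition cyclotomic :: "nat \<Rightarrow> int poly" where
  "cyclotomic d = (SOME \<mu>. prime \<mu> \<and> lead_coeff \<mu> = 1 \<and> \<mu> dvd xpow_minus_one d \<and> ipoly \<mu> (zeta d) = 0)"

lemma cyclotomic_spec: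
  assumes "d > 0"
  shows "prime (cyclotomic d)" "lead_coeff (cyclotomic d) = 1"
    "cyclotomic d dvd xpow_minus_one d" "ipoly (cyclotomic d) (zeta d) = 0"
proof -
  have "\<exists>\<mu>. prime \<mu> \<and> lead_coeff \<mu> = 1 \<and> \<mu> dvd xpow_minus_one d \<and> ipoly \<mu> (zeta d) = 0"
    using assms by (intro exists_monic_prime_factor_vanishing)
      (simp_all add: lead_coeff_xpow_minus_one zeta_power_self)
  from someI_ex[OF this] show "prime (cyclotomic d)" "lead_coeff (cyclotomic d) = 1"
    "cyclotomic d dvd xpow_minus_one d" "ipoly (cyclotomic d) (zeta d) = 0"
    unfolding cyclotomic_def by blast+
qed

lemma cyclotomic_nonzero: "d > 0 \<Longrightarrow> cyclotomic d \<noteq> 0"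
  using cyclotomic_spec(1) not_prime_0 by metis

lemma cyclotomic_dvd_iff_vanishing:
  assumes "d > 0"
  shows "cyclotomic d dvd g \<longleftrightarrow> ipoly g (zeta d) = 0"
  using prime_elem_vanishing_dvd[OF prime_imp_prime_elem[OF cyclotomic_spec(1)[OF assms]]]
    ipoly_dvd_eq_0 cyclotomic_spec(4)[OF assms] by blast

text \<open>Suppose \<open>\<nu> | X\<^sup>d - 1\<close> vanishes at \<open>w\<^sup>p\<close> but not at \<open>w\<close>, and write
  \<open>X\<^sup>d - 1 = \<nu> W\<close>. Then \<open>W(w) = 0\<close>, so \<open>d w\<^sup>d\<^sup>-\<^sup>1 = \<nu>(w) W'(w)\<close>; and \<open>\<nu>(w)\<^sup>p \<in> p \<int>[w]\<close> by the
  Frobenius congruence. Hence \<open>d\<^sup>p = p G(w)\<close> for an integer polynomial \<open>G\<close>, and reducing modulo the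
  monic minimal polynomial \<open>\<mu>\<close> of \<open>w\<close> gives \<open>p | d\<^sup>p\<close>.\<close>

lemma of_nat_power_eq_prime_mult_ipoly:
  assumes d: "d > 0" and w: "w ^ d = 1"
    and \<nu>: "\<nu> dvd xpow_minus_one d" "ipoly \<nu> (w ^ p) = 0" "ipoly \<nu> w \<noteq> 0"
    and p: "prime p"
  shows "\<exists>G. of_nat (d ^ p) = of_nat p * ipoly G w"
proof -
  obtain W where W: "xpow_minus_one d = \<nu> * W"
    using \<nu>(1) by blast
  have "ipoly \<nu> w * ipoly W w = 0"
    using arg_cong[OF W, of "\<lambda>g. ipoly g w"] w by simp
  then have "ipoly W w = 0"
    using \<nu>(3) by simp
  then have "ipoly (pderiv (xpow_minus_one d)) w = ipoly \<nu> w * ipoly (pderiv W) w"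
    unfolding W pderiv_mult by simp
  moreover have "ipoly (pderiv (xpow_minus_one d)) w = of_nat d * w ^ (d - 1)"
    by (simp add: xpow_minus_one_def pderiv_diff pderiv_monom)
  ultimately have deriv: "of_nat d * w ^ (d - 1) = ipoly \<nu> w * ipoly (pderiv W) w"
    by simp
  obtain r where "\<nu> ^ p = pcompose \<nu> (monom 1 p) + smult (int p) r"
    using int_poly_power_prime_eq[OF p] by blast
  from arg_cong[OF this, of "\<lambda>g. ipoly g w"]
  have frob: "ipoly \<nu> w ^ p = of_nat p * ipoly r w"
    using \<nu>(2) by (simp add: ipoly_pcompose)
  have "w ^ (d - 1) * w = 1"
    using w d by (simp flip: power_Suc2)
  moreover have "(of_nat d * w ^ (d - 1)) ^ p * w ^ p = of_nat d ^ p * (w ^ (d - 1) * w) ^ p"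
    by (simp add: power_mult_distrib)
  ultimately have "of_nat (d ^ p) = (of_nat d * w ^ (d - 1)) ^ p * w ^ p"
    by simp
  also have "\<dots> = of_nat p * ipoly (r * pderiv W ^ p * monom 1 p) w"
    unfolding deriv by (simp add: power_mult_distrib frob)
  finally show ?thesis ..
qed

lemma xpow_minus_one_factor_root_if_power_prime_root:
  assumes d: "d > 0" and w: "w ^ d = 1"
    and \<mu>: "prime_elem \<mu>" "lead_coeff \<mu> = 1" "ipoly \<mu> w = 0"
    and \<nu>: "\<nu> dvd xpow_minus_one d" "ipoly \<nu> (w ^ p) = 0"
    and p: "prime p" "\<not> p dvd d"
  shows "ipoly \<nu> w = 0"
proof (rule ccontr)
  assume "ipoly \<nu> w \<noteq> 0"
  then obtain G where "of_nat (d ^ p) = of_nat p * ipoly G w"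
    using of_nat_power_eq_prime_mult_ipoly[OF d w \<nu>] p(1) by blast
  then have "ipoly (smult (int p) G - [:int (d ^ p):]) w = 0"
    by simp
  then obtain h where "\<mu> * h = smult (int p) G - [:int (d ^ p):]"
    using prime_elem_vanishing_dvd[OF \<mu>(1,3)] by (metis dvdE)
  moreover have "degree \<mu> \<ge> 1"
    using degree_pos_if_ipoly_eq_0[of \<mu> w] \<mu> by auto
  ultimately have "int p dvd int (d ^ p)"
    using monic_dvd_smult_minus_const_imp_dvd[OF \<mu>(2)] by blast
  then have "p dvd d ^ p"
    by (simp only: of_nat_dvd_iff)
  then show False
    using p prime_dvd_power by blast
qed

lemma dedekind_root_power_prime:
  assumes d: "d > 0" and w: "w ^ d = 1"
    and \<mu>: "prime_elem \<mu>" "lead_coeff \<mu> = 1" "ipoly \<mu> w = 0"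
    and p: "prime p" "\<not> p dvd d"
  shows "ipoly \<mu> (w ^ p) = 0"
proof -
  have "(w ^ p) ^ d = (w ^ d) ^ p"
    by (simp only: power_mult[symmetric] mult.commute)
  then have "(w ^ p) ^ d = 1"
    using w by simp
  then obtain \<nu> where \<nu>: "prime \<nu>" "\<nu> dvd xpow_minus_one d" "ipoly \<nu> (w ^ p) = 0"
    using exists_monic_prime_factor_vanishing[of "xpow_minus_one d" "w ^ p"] d
    by (auto simp: lead_coeff_xpow_minus_one)
  have "ipoly \<nu> w = 0"
    using xpow_minus_one_factor_root_if_power_prime_root[OF d w \<mu> \<nu>(2,3) p] .
  then have "\<nu> dvd \<mu>"
    using prime_elem_vanishing_dvd \<nu>(1) \<mu>(3) by blast
  then show ?thesis
    using ipoly_dvd_eq_0 \<nu>(3) by blast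
qed

lemma cyclotomic_root_power_coprime:
  assumes d: "d > 0"
  shows "coprime k d \<Longrightarrow> ipoly (cyclotomic d) (zeta d ^ k) = 0"
proof (induction k rule: prime_divisors_induct)
  case zero
  then have "d = 1" by simp
  then show ?case
    using cyclotomic_spec(4)[of 1] zeta_1 by simp
next
  case (unit k)
  then show ?case
    using cyclotomic_spec(4)[OF d] by simp
next
  case (factor p k)
  have "(zeta d ^ k) ^ d = (zeta d ^ d) ^ k"
    by (simp only: power_mult[symmetric] mult.commute)
  then have "(zeta d ^ k) ^ d = 1"
    using zeta_power_self[OF d] by simp
  moreover have "\<not> p dvd d"
    using factor coprime_common_divisor not_prime_unit by (meson dvd_triv_left)
  moreover have "ipoly (cyclotomic d) (zeta d ^ k) = 0"
    using factor by simp
  ultimately have "ipoly (cyclotomic d) ((zeta d ^ k) ^ p) = 0"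
    using dedekind_root_power_prime[OF d _ _ cyclotomic_spec(2)[OF d]]
      prime_imp_prime_elem[OF cyclotomic_spec(1)[OF d]] factor.hyps by blast
  then show ?case
    by (simp add: power_mult mult.commute)
qed

lemma cyclotomic_dvd_cyclotomic_imp_eq:
  assumes "d > 0" "e > 0" "cyclotomic d dvd cyclotomic e"
  shows "d = e"
proof -
  have eq: "cyclotomic d = cyclotomic e"
    by (rule primes_dvd_imp_eq[OF cyclotomic_spec(1)[OF assms(1)] cyclotomic_spec(1)[OF assms(2)] assms(3)])
  have "ipoly (xpow_minus_one d) (zeta e) = 0"
    using ipoly_dvd_eq_0[OF cyclotomic_spec(3)[OF assms(1)]] cyclotomic_spec(4)[OF assms(2)] eq
    by simp
  moreover have "ipoly (xpow_minus_one e) (zeta d) = 0"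
    using ipoly_dvd_eq_0[OF cyclotomic_spec(3)[OF assms(2)]] cyclotomic_spec(4)[OF assms(1)] eq
    by simp
  ultimately have "e dvd d" "d dvd e"
    using zeta_power_eq_1_iff[OF assms(2), of d] zeta_power_eq_1_iff[OF assms(1), of e] by simp_all
  then show ?thesis
    by (rule dvd_antisym[rotated])
qed

lemma totient_le_degree_cyclotomic:
  assumes d: "d > 0"
  shows "totient d \<le> degree (cyclotomic d)"
proof -
  define P where "P = map_poly (of_int :: int \<Rightarrow> complex) (cyclotomic d)"
  have "P \<noteq> 0"
    using cyclotomic_nonzero[OF d] by (simp add: P_def map_poly_eq_0_iff)
  have roots: "(\<lambda>k. zeta d ^ k) ` totatives d \<subseteq> {x. poly P x = 0}"
    using cyclotomic_root_power_coprime[OF d]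
    by (auto simp: P_def ipoly_def totatives_def)
  have "inj_on (\<lambda>k. zeta d ^ k) (totatives d)"
  proof (rule inj_onI)
    fix k l assume kl: "k \<in> totatives d" "l \<in> totatives d" "zeta d ^ k = zeta d ^ l"
    show "k = l"
    proof (cases "d = 1")
      case False
      then have "k < d" "l < d"
        using d kl totatives_less by auto
      then show ?thesis
        using kl(3) zeta_power_eq_iff[OF d] by simp
    qed (use kl in simp)
  qed
  then have "totient d = card ((\<lambda>k. zeta d ^ k) ` totatives d)"
    unfolding totient_def by (simp add: card_image)
  also have "\<dots> \<le> card {x. poly P x = 0}"
    by (rule card_mono[OF poly_roots_finite[OF \<open>P \<noteq> 0\<close>] roots])
  also have "\<dots> \<le> degree P"
    by (rule card_poly_roots_bound[OF \<open>P \<noteq> 0\<close>])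
  finally show ?thesis
    by (simp add: P_def degree_map_poly)
qed

definition cyclotomic_prod :: "nat set \<Rightarrow> int poly" where
  "cyclotomic_prod B = (\<Prod>d\<in>B. cyclotomic d)"

lemma cyclotomic_prod_dvd_iff:
  assumes fin: "finite B" and pos: "\<forall>d\<in>B. d > 0"
  shows "cyclotomic_prod B dvd g \<longleftrightarrow> (\<forall>d\<in>B. ipoly g (zeta d) = 0)"
  using fin pos unfolding cyclotomic_prod_def
proof (induction B rule: finite_induct)
  case (insert d B)
  have "\<not> cyclotomic d dvd cyclotomic e" if "e \<in> B" for e
  proof
    assume "cyclotomic d dvd cyclotomic e"
    then have "d = e"
      using cyclotomic_dvd_cyclotomic_imp_eq insert.prems that by simp
    then show False
      using insert.hyps(2) that by simp
  qed
  then have "\<not> cyclotomic d dvd (\<Prod>e\<in>B. cyclotomic e)"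
    using insert by (simp add: prime_dvd_prod_iff cyclotomic_spec(1))
  moreover have "prime_elem (cyclotomic d)"
    using insert.prems cyclotomic_spec(1) by (simp add: prime_imp_prime_elem)
  ultimately have "coprime (cyclotomic d) (\<Prod>e\<in>B. cyclotomic e)"
    by (simp add: prime_elem_imp_coprime)
  then have "cyclotomic d * (\<Prod>e\<in>B. cyclotomic e) dvd g
      \<longleftrightarrow> cyclotomic d dvd g \<and> (\<Prod>e\<in>B. cyclotomic e) dvd g"
    by (meson divides_mult dvd_mult_left dvd_mult_right)
  then show ?case
    using insert.IH insert.prems insert.hyps cyclotomic_dvd_iff_vanishing by simp
qed simp

lemma lead_coeff_cyclotomic_prod:
  "finite B \<Longrightarrow> \<forall>d\<in>B. d > 0 \<Longrightarrow> lead_coeff (cyclotomic_prod B) = 1"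
  unfolding cyclotomic_prod_def lead_coeff_prod by (simp add: cyclotomic_spec(2))

lemma degree_cyclotomic_prod_eq_sum:
  "finite B \<Longrightarrow> \<forall>d\<in>B. d > 0 \<Longrightarrow> degree (cyclotomic_prod B) = (\<Sum>d\<in>B. degree (cyclotomic d))"
  unfolding cyclotomic_prod_def by (rule degree_prod_eq_sum_degree) (simp add: cyclotomic_nonzero)

text \<open>All \<open>\<Phi>\<^sub>e\<close> with \<open>e | d\<close> divide \<open>X\<^sup>d - 1\<close>, so their degrees sum to at most \<open>d = \<Sum>\<^sub>e\<^sub>|\<^sub>d \<phi>(e)\<close>;
  since each degree is at least \<open>\<phi>(e)\<close>, all these inequalities are equalities.\<close>

lemma degree_cyclotomic:
  assumes d: "d > 0"
  shows "degree (cyclotomic d) = totient d"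
proof (rule ccontr)
  assume ne: "degree (cyclotomic d) \<noteq> totient d"
  define S where "S = {e. e dvd d}"
  have fin: "finite S" and pos: "\<forall>e\<in>S. e > 0"
    unfolding S_def using d by (auto intro: gr0I)
  have "\<forall>e\<in>S. ipoly (xpow_minus_one d) (zeta e) = 0"
    using pos zeta_power_eq_1_iff unfolding S_def by simp
  then have "cyclotomic_prod S dvd xpow_minus_one d"
    using cyclotomic_prod_dvd_iff[OF fin pos] by blast
  moreover have "xpow_minus_one d \<noteq> 0"
    using lead_coeff_xpow_minus_one[OF d] by auto
  ultimately have "degree (cyclotomic_prod S) \<le> d"
    using dvd_imp_degree_le degree_xpow_minus_one[OF d] by metis
  then have "(\<Sum>e\<in>S. degree (cyclotomic e)) \<le> d"
    using degree_cyclotomic_prod_eq_sum[OF fin pos] by simp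
  moreover have "(\<Sum>e\<in>S. totient e) < (\<Sum>e\<in>S. degree (cyclotomic e))"
  proof (rule sum_strict_mono_ex1[OF fin])
    show "\<forall>e\<in>S. totient e \<le> degree (cyclotomic e)"
      using pos totient_le_degree_cyclotomic by blast
    show "\<exists>e\<in>S. totient e < degree (cyclotomic e)"
    proof
      show "totient d < degree (cyclotomic d)"
        using ne totient_le_degree_cyclotomic[OF d] by simp
    qed (simp add: S_def)
  qed
  moreover have "(\<Sum>e\<in>S. totient e) = d"
    unfolding S_def by (rule totient_divisor_sum)
  ultimately show False
    by simp
qed

lemma degree_cyclotomic_prod:
  "finite B \<Longrightarrow> \<forall>d\<in>B. d > 0 \<Longrightarrow> degree (cyclotomic_prod B) = (\<Sum>d\<in>B. totient d)"
  by (simp add: degree_cyclotomic_prod_eq_sum degree_cyclotomic)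

section \<open>Residues modulo a monic polynomial and an integer\<close>

lemma monic_pseudo_mod:
  fixes F h :: "int poly"
  assumes "lead_coeff F = 1"
  shows "F dvd h - pseudo_mod h F" and "\<forall>i\<ge>degree F. coeff (pseudo_mod h F) i = 0"
proof -
  have F: "F \<noteq> 0" using assms by auto
  obtain k r where kr: "pseudo_divmod h F = (k, r)"
    by (cases "pseudo_divmod h F")
  then have "smult (lead_coeff F ^ (Suc (degree h) - degree F)) h = F * k + pseudo_mod h F"
    using pseudo_divmod(1)[OF F kr] by (simp add: pseudo_mod_def)
  then have "h - pseudo_mod h F = F * k"
    using assms by simp
  then show "F dvd h - pseudo_mod h F"
    by (rule dvdI)
  show "\<forall>i\<ge>degree F. coeff (pseudo_mod h F) i = 0"
    using pseudo_mod(2)[OF F, of h] by (auto intro: coeff_eq_0)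
qed

lemma dvd_vanishing_above_degree_imp_0:
  fixes F r :: "'a::idom poly"
  assumes "F dvd r" "F \<noteq> 0" "\<forall>i\<ge>degree F. coeff r i = 0"
  shows "r = 0"
proof (rule ccontr)
  assume "r \<noteq> 0"
  then have "degree F \<le> degree r"
    using assms(1) by (rule dvd_imp_degree_le[rotated])
  then have "lead_coeff r = 0"
    using assms(3) by blast
  then show False
    using \<open>r \<noteq> 0\<close> by simp
qed

lemma monic_pseudo_mod_unique:
  fixes F h r :: "int poly"
  assumes monic: "lead_coeff F = 1" and "F dvd h - r" and r: "\<forall>i\<ge>degree F. coeff r i = 0"
  shows "pseudo_mod h F = r"
proof -
  have "F dvd (h - r) - (h - pseudo_mod h F)"
    using assms(2) monic_pseudo_mod(1)[OF monic] by (rule dvd_diff)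
  then have "F dvd pseudo_mod h F - r"
    by simp
  moreover have "F \<noteq> 0"
    using monic by auto
  moreover have "\<forall>i\<ge>degree F. coeff (pseudo_mod h F - r) i = 0"
    using monic_pseudo_mod(2)[OF monic] r by simp
  ultimately have "pseudo_mod h F - r = 0"
    by (rule dvd_vanishing_above_degree_imp_0)
  then show ?thesis
    by simp
qed

lemma monic_pseudo_mod_diff:
  fixes F h h' :: "int poly"
  assumes monic: "lead_coeff F = 1"
  shows "pseudo_mod (h - h') F = pseudo_mod h F - pseudo_mod h' F"
proof (rule monic_pseudo_mod_unique[OF monic])
  have "F dvd (h - pseudo_mod h F) - (h' - pseudo_mod h' F)"
    using monic_pseudo_mod(1)[OF monic, of h] monic_pseudo_mod(1)[OF monic, of h'] by (rule dvd_diff)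
  then show "F dvd h - h' - (pseudo_mod h F - pseudo_mod h' F)"
    by (simp add: algebra_simps)
  show "\<forall>i\<ge>degree F. coeff (pseudo_mod h F - pseudo_mod h' F) i = 0"
    using monic_pseudo_mod(2)[OF monic] by simp
qed

lemma monic_pseudo_mod_mult_add_smult:
  fixes F a v :: "int poly"
  assumes monic: "lead_coeff F = 1"
  shows "pseudo_mod (F * a + smult q v) F = smult q (pseudo_mod v F)"
proof (rule monic_pseudo_mod_unique[OF monic])
  have "F dvd F * a + smult q (v - pseudo_mod v F)"
    using monic_pseudo_mod(1)[OF monic] by (simp add: dvd_smult)
  then show "F dvd F * a + smult q v - smult q (pseudo_mod v F)"
    by (simp add: smult_diff_right algebra_simps)
  show "\<forall>i\<ge>degree F. coeff (smult q (pseudo_mod v F)) i = 0"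
    using monic_pseudo_mod(2)[OF monic] by simp
qed

text \<open>For monic \<open>F\<close>, the canonical representative of \<open>h\<close> in \<open>\<int>[X]/(F, q)\<close>.\<close>

definition reduce_mod :: "int \<Rightarrow> int poly \<Rightarrow> int poly \<Rightarrow> int poly" where
  "reduce_mod q F h = map_poly (\<lambda>c. c mod q) (pseudo_mod h F)"

definition reduced_polys :: "int \<Rightarrow> nat \<Rightarrow> int poly set" where
  "reduced_polys q D = {r. (\<forall>i. coeff r i \<in> {0..<q}) \<and> (\<forall>i\<ge>D. coeff r i = 0)}"

lemma reduced_polys_0: "q > 0 \<Longrightarrow> reduced_polys q 0 = {0}"
  by (auto simp: reduced_polys_def poly_eq_iff)

lemma pCons_mem_reduced_polys_iff:
  "pCons c p \<in> reduced_polys q (Suc D) \<longleftrightarrow> c \<in> {0..<q} \<and> p \<in> reduced_polys q D"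
proof
  assume "pCons c p \<in> reduced_polys q (Suc D)"
  then show "c \<in> {0..<q} \<and> p \<in> reduced_polys q D"
    unfolding reduced_polys_def
    by (smt (verit, best) Suc_le_mono coeff_pCons_0 coeff_pCons_Suc mem_Collect_eq)
next
  assume "c \<in> {0..<q} \<and> p \<in> reduced_polys q D"
  then show "pCons c p \<in> reduced_polys q (Suc D)"
    by (auto simp: reduced_polys_def coeff_pCons split: nat.split)
qed

lemma reduced_polys_Suc:
  "reduced_polys q (Suc D) = (\<lambda>(c, r). pCons c r) ` ({0..<q} \<times> reduced_polys q D)"
proof (intro equalityI subsetI)
  fix r assume r: "r \<in> reduced_polys q (Suc D)"
  obtain c p where "r = pCons c p"
    by (cases r)
  with r show "r \<in> (\<lambda>(c, r). pCons c r) ` ({0..<q} \<times> reduced_polys q D)"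
    using pCons_mem_reduced_polys_iff by blast
qed (auto simp: pCons_mem_reduced_polys_iff)

lemma card_reduced_polys:
  assumes "q > 0"
  shows "card (reduced_polys q D) = nat q ^ D"
proof (induction D)
  case 0
  then show ?case using assms by (simp add: reduced_polys_0)
next
  case (Suc D)
  have "inj_on (\<lambda>(c, r). pCons c r) ({0..<q} \<times> reduced_polys q D)"
    by (auto intro: inj_onI)
  then show ?case
    using Suc by (simp add: reduced_polys_Suc card_image card_cartesian_product)
qed

lemma reduce_mod_eq_iff:
  assumes monic: "lead_coeff F = 1"
  shows "reduce_mod q F h = reduce_mod q F h' \<longleftrightarrow> (\<exists>a v. h - h' = F * a + smult q v)"
proof
  assume eq: "reduce_mod q F h = reduce_mod q F h'"
  have "coeff (pseudo_mod h F) i mod q = coeff (pseudo_mod h' F) i mod q" for i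
    using arg_cong[OF eq, of "\<lambda>p. coeff p i"] by (simp add: reduce_mod_def coeff_map_poly)
  then have "\<forall>i. q dvd coeff (pseudo_mod h F - pseudo_mod h' F) i"
    by (simp add: mod_eq_dvd_iff)
  then obtain v where v: "pseudo_mod h F - pseudo_mod h' F = smult q v"
    using int_poly_eq_smult_if_dvd_coeffs by blast
  obtain k k' where "h - pseudo_mod h F = F * k" "h' - pseudo_mod h' F = F * k'"
    using monic_pseudo_mod(1)[OF monic] by (meson dvdE)
  then have "h - h' = F * (k - k') + smult q v"
    using v by (simp add: algebra_simps)
  then show "\<exists>a v. h - h' = F * a + smult q v"
    by blast
next
  assume "\<exists>a v. h - h' = F * a + smult q v"
  then obtain a v where "h - h' = F * a + smult q v"
    by blast
  then have "pseudo_mod h F - pseudo_mod h' F = smult q (pseudo_mod v F)"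
    using monic_pseudo_mod_diff[OF monic, of h h'] monic_pseudo_mod_mult_add_smult[OF monic] by simp
  then have "coeff (pseudo_mod h F) i - coeff (pseudo_mod h' F) i = q * coeff (pseudo_mod v F) i" for i
    by (metis coeff_diff coeff_smult)
  then have "coeff (pseudo_mod h F) i mod q = coeff (pseudo_mod h' F) i mod q" for i
    by (simp add: mod_eq_dvd_iff)
  then show "reduce_mod q F h = reduce_mod q F h'"
    unfolding reduce_mod_def by (intro poly_eqI) (simp add: coeff_map_poly)
qed

lemma range_reduce_mod:
  assumes monic: "lead_coeff F = 1" and q: "q > 0"
  shows "range (reduce_mod q F) = reduced_polys q (degree F)"
proof (intro equalityI subsetI)
  fix r assume "r \<in> range (reduce_mod q F)"
  then obtain h where "r = reduce_mod q F h" by blast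
  then show "r \<in> reduced_polys q (degree F)"
    using monic_pseudo_mod(2)[OF monic, of h] q
    by (simp add: reduced_polys_def reduce_mod_def coeff_map_poly)
next
  fix r assume r: "r \<in> reduced_polys q (degree F)"
  then have "pseudo_mod r F = r"
    by (intro monic_pseudo_mod_unique[OF monic]) (simp_all add: reduced_polys_def)
  moreover have "map_poly (\<lambda>c. c mod q) r = r"
    using r by (intro poly_eqI) (simp add: reduced_polys_def coeff_map_poly)
  ultimately have "reduce_mod q F r = r"
    by (simp add: reduce_mod_def)
  then show "r \<in> range (reduce_mod q F)"
    by (metis rangeI)
qed

section \<open>Evaluation at the roots of unity of a set of orders\<close>

text \<open>The map \<open>g \<mapsto> (g(\<zeta>\<^sub>d))\<^sub>d\<^sub>\<in>\<^sub>B\<close> for an arbitrary set \<open>B\<close> of orders, defined on \<open>\<int>[X]\<close> rather than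
  on \<open>\<int>C\<^sub>m = \<int>[X]/(X\<^sup>m - 1)\<close>; the Wedderburn embedding is the case of the divisors of \<open>m\<close>.\<close>

definition omega :: "nat set \<Rightarrow> int poly \<Rightarrow> nat \<Rightarrow> complex" where
  "omega B g = (\<lambda>d. if d \<in> B then ipoly g (zeta d) else 0)"

definition omega_target :: "nat set \<Rightarrow> (nat \<Rightarrow> complex) set" where
  "omega_target B = {f. (\<forall>d\<in>B. f d \<in> int_cyclotomic_ring d) \<and> (\<forall>d. d \<notin> B \<longrightarrow> f d = 0)}"

definition omega_index :: "nat set \<Rightarrow> nat" where
  "omega_index B = subgroup_index (omega_target B) (range (omega B))"

lemma int_cyclotomic_ring_eq_range: "int_cyclotomic_ring d = range (\<lambda>g. ipoly g (zeta d))"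
  unfolding int_cyclotomic_ring_def ipoly_def by auto

lemma omega_0 [simp]: "omega B 0 = 0"
  unfolding omega_def by (rule ext) simp

lemma omega_diff: "omega B (g - h) = omega B g - omega B h"
  unfolding omega_def by (rule ext) simp

lemma omega_add: "omega B (g + h) = omega B g + omega B h"
  unfolding omega_def by (rule ext) simp

lemma omega_union:
  "B1 \<inter> B2 = {} \<Longrightarrow> omega (B1 \<union> B2) g = omega B1 g + omega B2 g"
  unfolding omega_def by (auto simp: fun_eq_iff)

lemma add_subgroup_range_omega: "add_subgroup (range (omega B))"
proof -
  have "omega B g + omega B h \<in> range (omega B)" "omega B g - omega B h \<in> range (omega B)" for g h
    using rangeI[of "omega B" "g + h"] rangeI[of "omega B" "g - h"] by (simp_all add: omega_add omega_diff)
  moreover have "0 \<in> range (omega B)"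
    using rangeI[of "omega B" 0] by simp
  ultimately show ?thesis
    unfolding add_subgroup_def by blast
qed

lemma add_subgroup_omega_target: "add_subgroup (omega_target B)"
proof -
  have "ipoly g z + ipoly h z = ipoly (g + h) z" "ipoly g z - ipoly h z = ipoly (g - h) z"
    "0 = ipoly 0 z" for g h z
    by simp_all
  then have "a + b \<in> int_cyclotomic_ring d" "a - b \<in> int_cyclotomic_ring d"
    if "a \<in> int_cyclotomic_ring d" "b \<in> int_cyclotomic_ring d" for a b d
    using that unfolding int_cyclotomic_ring_eq_range by blast+
  moreover have "0 \<in> int_cyclotomic_ring d" for d
    using \<open>0 = ipoly 0 _\<close> unfolding int_cyclotomic_ring_eq_range by blast
  ultimately show ?thesis
    unfolding add_subgroup_def omega_target_def by auto
qed

lemma range_omega_subset_target: "range (omega B) \<subseteq> omega_target B"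
  unfolding omega_def omega_target_def int_cyclotomic_ring_eq_range by auto

lemma omega_eq_iff:
  assumes "finite B" "\<forall>d\<in>B. d > 0"
  shows "omega B g = omega B h \<longleftrightarrow> cyclotomic_prod B dvd g - h"
  using cyclotomic_prod_dvd_iff[OF assms] unfolding omega_def by (auto simp: fun_eq_iff)

lemma omega_index_singleton:
  assumes "d > 0"
  shows "omega_index {d} = 1"
proof -
  have "omega_target {d} \<subseteq> range (omega {d})"
  proof
    fix f assume f: "f \<in> omega_target {d}"
    then obtain g where "f d = ipoly g (zeta d)"
      unfolding omega_target_def int_cyclotomic_ring_eq_range by auto
    then have "f = omega {d} g"
      using f unfolding omega_def omega_target_def by auto
    then show "f \<in> range (omega {d})" by simp
  qed
  then have "omega_target {d} = range (omega {d})"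
    using range_omega_subset_target by blast
  then have "add_coset (range (omega {d})) ` omega_target {d} = {range (omega {d})}"
    using add_coset_self[OF add_subgroup_range_omega] by (auto intro!: image_eqI[of _ _ 0])
  then show ?thesis
    unfolding omega_index_def subgroup_index_def by simp
qed

lemma exists_common_lift_iff:
  fixes F1 F2 h k :: "'a::comm_ring_1"
  shows "(\<exists>G. F1 dvd G - h \<and> F2 dvd G - k) \<longleftrightarrow> (\<exists>a b. h - k = F1 * a + F2 * b)"
proof
  assume "\<exists>G. F1 dvd G - h \<and> F2 dvd G - k"
  then obtain G a b where "G - h = F1 * a" "G - k = F2 * b"
    by (auto elim!: dvdE)
  then have "h - k = F1 * (- a) + F2 * b"
    by (simp add: algebra_simps)
  then show "\<exists>a b. h - k = F1 * a + F2 * b"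
    by blast
next
  assume "\<exists>a b. h - k = F1 * a + F2 * b"
  then obtain a b where "h - k = F1 * a + F2 * b"
    by blast
  then have "F1 dvd (h - F1 * a) - h" "F2 dvd (h - F1 * a) - k"
    by (simp_all add: algebra_simps)
  then show "\<exists>G. F1 dvd G - h \<and> F2 dvd G - k"
    by blast
qed

lemma ideal_eq_if_generators:
  fixes F1 F2 Q X :: "'a::comm_ring_1"
  assumes gen: "Q = F1 * x + F2 * y" and cong: "F2 = F1 * a0 + Q * b0"
  shows "(\<exists>a b. X = F1 * a + F2 * b) \<longleftrightarrow> (\<exists>a b. X = F1 * a + Q * b)"
proof
  assume "\<exists>a b. X = F1 * a + F2 * b"
  then obtain a b where "X = F1 * a + F2 * b"
    by blast
  then have "X = F1 * (a + a0 * b) + Q * (b0 * b)"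
    unfolding cong by (simp add: algebra_simps)
  then show "\<exists>a b. X = F1 * a + Q * b"
    by blast
next
  assume "\<exists>a b. X = F1 * a + Q * b"
  then obtain a b where "X = F1 * a + Q * b"
    by blast
  then have "X = F1 * (a + x * b) + F2 * (y * b)"
    unfolding gen by (simp add: algebra_simps)
  then show "\<exists>a b. X = F1 * a + F2 * b"
    by blast
qed

lemma add_eq_add_iff_disjoint_supports:
  fixes a1 a2 b1 b2 :: "'a \<Rightarrow> 'b::comm_monoid_add"
  assumes "B1 \<inter> B2 = {}"
    and "\<And>d. d \<notin> B1 \<Longrightarrow> a1 d = 0" "\<And>d. d \<notin> B1 \<Longrightarrow> b1 d = 0"
    and "\<And>d. d \<notin> B2 \<Longrightarrow> a2 d = 0" "\<And>d. d \<notin> B2 \<Longrightarrow> b2 d = 0"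
  shows "a1 + a2 = b1 + b2 \<longleftrightarrow> a1 = b1 \<and> a2 = b2"
proof
  assume eq: "a1 + a2 = b1 + b2"
  have "a1 d = b1 d \<and> a2 d = b2 d" for d
  proof (cases "d \<in> B1")
    case True
    then have "d \<notin> B2"
      using assms(1) by blast
    then show ?thesis
      using fun_cong[OF eq, of d] assms(4,5) by simp
  next
    case False
    then show ?thesis
      using fun_cong[OF eq, of d] assms(2,3) by simp
  qed
  then show "a1 = b1 \<and> a2 = b2"
    by (simp add: fun_eq_iff)
qed simp

locale omega_split =
  fixes B1 B2 :: "nat set"
  assumes finite: "finite B1" "finite B2"
    and pos: "\<forall>d\<in>B1 \<union> B2. d > 0"
    and disjoint: "B1 \<inter> B2 = {}"
begin

lemma pos1: "\<forall>d\<in>B1. d > 0" and pos2: "\<forall>d\<in>B2. d > 0"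
  using pos by auto

definition sum_image :: "(nat \<Rightarrow> complex) set" where
  "sum_image = {omega B1 g1 + omega B2 g2 | g1 g2. True}"

lemma add_subgroup_sum_image: "add_subgroup sum_image"
proof -
  have "omega B1 g1 + omega B2 g2 + (omega B1 h1 + omega B2 h2)
      = omega B1 (g1 + h1) + omega B2 (g2 + h2)"
    "omega B1 g1 + omega B2 g2 - (omega B1 h1 + omega B2 h2)
      = omega B1 (g1 - h1) + omega B2 (g2 - h2)"
    "0 = omega B1 0 + omega B2 0" for g1 g2 h1 h2
    by (simp_all add: omega_add omega_diff algebra_simps)
  then show ?thesis
    unfolding add_subgroup_def sum_image_def by blast
qed

lemma range_omega_subset_sum_image: "range (omega (B1 \<union> B2)) \<subseteq> sum_image"
  unfolding sum_image_def using omega_union[OF disjoint] by auto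

lemma omega_target_union:
  "omega_target (B1 \<union> B2) = (\<lambda>(t1, t2). t1 + t2) ` (omega_target B1 \<times> omega_target B2)"
proof (intro equalityI subsetI)
  fix f assume f: "f \<in> omega_target (B1 \<union> B2)"
  define restrict where "restrict B = (\<lambda>d. if d \<in> B then f d else 0)" for B
  have "restrict B1 \<in> omega_target B1" "restrict B2 \<in> omega_target B2"
    using f unfolding omega_target_def restrict_def by auto
  moreover have "f = restrict B1 + restrict B2"
    using f disjoint unfolding omega_target_def restrict_def by (auto simp: fun_eq_iff)
  ultimately show "f \<in> (\<lambda>(t1, t2). t1 + t2) ` (omega_target B1 \<times> omega_target B2)"
    by force
next
  fix f assume "f \<in> (\<lambda>(t1, t2). t1 + t2) ` (omega_target B1 \<times> omega_target B2)"
  then obtain t1 t2 where "f = t1 + t2" "t1 \<in> omega_target B1" "t2 \<in> omega_target B2"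
    by auto
  then show "f \<in> omega_target (B1 \<union> B2)"
    using disjoint unfolding omega_target_def by auto
qed

lemma sum_image_subset_target: "sum_image \<subseteq> omega_target (B1 \<union> B2)"
  unfolding sum_image_def omega_target_union using range_omega_subset_target by fast

lemma add_diff_add_mem_sum_image_iff:
  assumes "t1 \<in> omega_target B1" "s1 \<in> omega_target B1" "t2 \<in> omega_target B2" "s2 \<in> omega_target B2"
  shows "(t1 + t2) - (s1 + s2) \<in> sum_image \<longleftrightarrow> t1 - s1 \<in> range (omega B1) \<and> t2 - s2 \<in> range (omega B2)"
proof -
  have eq: "(t1 + t2) - (s1 + s2) = (t1 - s1) + (t2 - s2)"
    by (simp add: algebra_simps)
  have "(t1 - s1) + (t2 - s2) = omega B1 g1 + omega B2 g2
      \<longleftrightarrow> t1 - s1 = omega B1 g1 \<and> t2 - s2 = omega B2 g2" for g1 g2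
    using assms by (intro add_eq_add_iff_disjoint_supports[OF disjoint])
      (auto simp: omega_target_def omega_def)
  then have "(t1 + t2) - (s1 + s2) \<in> sum_image
      \<longleftrightarrow> (\<exists>g1 g2. t1 - s1 = omega B1 g1 \<and> t2 - s2 = omega B2 g2)"
    unfolding sum_image_def eq by simp
  then show ?thesis
    by blast
qed

lemma index_target_sum_image:
  "subgroup_index (omega_target (B1 \<union> B2)) sum_image = omega_index B1 * omega_index B2"
proof -
  let ?\<chi> = "\<lambda>(t1, t2). (add_coset (range (omega B1)) t1, add_coset (range (omega B2)) t2)"
  have "subgroup_index (omega_target (B1 \<union> B2)) sum_image = card (?\<chi> ` (omega_target B1 \<times> omega_target B2))"
  proof (rule subgroup_index_eq_card_image[OF add_subgroup_sum_image omega_target_union])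
    fix u v assume "u \<in> omega_target B1 \<times> omega_target B2" "v \<in> omega_target B1 \<times> omega_target B2"
    then obtain t1 t2 s1 s2 where "u = (t1, t2)" "v = (s1, s2)"
      and "t1 \<in> omega_target B1" "s1 \<in> omega_target B1" "t2 \<in> omega_target B2" "s2 \<in> omega_target B2"
      by auto
    then show "(case u of (t1, t2) \<Rightarrow> t1 + t2) - (case v of (t1, t2) \<Rightarrow> t1 + t2) \<in> sum_image
        \<longleftrightarrow> ?\<chi> u = ?\<chi> v"
      using add_diff_add_mem_sum_image_iff add_coset_eq_iff[OF add_subgroup_range_omega] by simp
  qed
  also have "?\<chi> ` (omega_target B1 \<times> omega_target B2)
      = add_coset (range (omega B1)) ` omega_target B1 \<times> add_coset (range (omega B2)) ` omega_target B2"
    by auto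
  finally show ?thesis
    unfolding omega_index_def subgroup_index_def by (simp add: card_cartesian_product)
qed

lemma add_omega_mem_range_omega_union_iff:
  "omega B1 h + omega B2 k \<in> range (omega (B1 \<union> B2))
    \<longleftrightarrow> (\<exists>G. omega B1 G = omega B1 h \<and> omega B2 G = omega B2 k)"
proof -
  have "omega B1 G + omega B2 G = omega B1 h + omega B2 k
      \<longleftrightarrow> omega B1 G = omega B1 h \<and> omega B2 G = omega B2 k" for G
    by (rule add_eq_add_iff_disjoint_supports[OF disjoint]) (simp_all add: omega_def)
  moreover have "omega B1 h + omega B2 k \<in> range (omega (B1 \<union> B2))
      \<longleftrightarrow> (\<exists>G. omega B1 G + omega B2 G = omega B1 h + omega B2 k)"
    unfolding omega_union[OF disjoint] image_iff by (auto simp: eq_commute)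
  ultimately show ?thesis
    by simp
qed

lemma lead_coeff_cyclotomic_prod1: "lead_coeff (cyclotomic_prod B1) = 1"
  by (rule lead_coeff_cyclotomic_prod[OF finite(1) pos1])

text \<open>The hypotheses make the ideals \<open>(F\<^sub>1, F\<^sub>2)\<close> and \<open>(F\<^sub>1, q)\<close> of \<open>\<int>[X]\<close> equal, and by the Chinese
  remainder theorem \<open>\<omega>\<^sub>1(g\<^sub>1) + \<omega>\<^sub>2(g\<^sub>2)\<close> lies in the image of \<open>\<omega>\<close> iff \<open>g\<^sub>1 - g\<^sub>2 \<in> (F\<^sub>1, F\<^sub>2)\<close>.
  So the quotient is \<open>\<int>[X]/(F\<^sub>1, q)\<close>.\<close>

lemma sum_image_diff_mem_range_iff:
  assumes gen: "[:q:] = cyclotomic_prod B1 * x + cyclotomic_prod B2 * y"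
    and cong: "cyclotomic_prod B2 = cyclotomic_prod B1 * a0 + smult q b0"
  shows "omega B1 g1 + omega B2 g2 - (omega B1 g1' + omega B2 g2') \<in> range (omega (B1 \<union> B2))
    \<longleftrightarrow> reduce_mod q (cyclotomic_prod B1) (g1 - g2) = reduce_mod q (cyclotomic_prod B1) (g1' - g2')"
proof -
  let ?F1 = "cyclotomic_prod B1" and ?F2 = "cyclotomic_prod B2"
  define h k where "h = g1 - g1'" and "k = g2 - g2'"
  have "omega B1 g1 + omega B2 g2 - (omega B1 g1' + omega B2 g2') = omega B1 h + omega B2 k"
    unfolding h_def k_def by (simp add: omega_diff algebra_simps)
  then have "omega B1 g1 + omega B2 g2 - (omega B1 g1' + omega B2 g2') \<in> range (omega (B1 \<union> B2))
      \<longleftrightarrow> (\<exists>G. omega B1 G = omega B1 h \<and> omega B2 G = omega B2 k)"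
    by (simp add: add_omega_mem_range_omega_union_iff)
  also have "\<dots> \<longleftrightarrow> (\<exists>G. ?F1 dvd G - h \<and> ?F2 dvd G - k)"
    using omega_eq_iff[OF finite(1) pos1] omega_eq_iff[OF finite(2) pos2] by simp
  also have "\<dots> \<longleftrightarrow> (\<exists>a b. h - k = ?F1 * a + ?F2 * b)"
    by (rule exists_common_lift_iff)
  also have "\<dots> \<longleftrightarrow> (\<exists>a v. h - k = ?F1 * a + [:q:] * v)"
    using cong by (intro ideal_eq_if_generators[OF gen]) simp
  also have "\<dots> \<longleftrightarrow> reduce_mod q ?F1 (g1 - g2) = reduce_mod q ?F1 (g1' - g2')"
    unfolding reduce_mod_eq_iff[OF lead_coeff_cyclotomic_prod1] h_def k_def by (simp add: algebra_simps)
  finally show ?thesis .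
qed

lemma index_sum_image_range:
  assumes q: "q > 0"
    and gen: "[:q:] = cyclotomic_prod B1 * x + cyclotomic_prod B2 * y"
    and cong: "cyclotomic_prod B2 = cyclotomic_prod B1 * a0 + smult q b0"
  shows "subgroup_index sum_image (range (omega (B1 \<union> B2))) = nat q ^ degree (cyclotomic_prod B1)"
proof -
  let ?\<psi> = "\<lambda>(g1, g2). omega B1 g1 + omega B2 g2"
    and ?\<chi> = "\<lambda>(g1, g2). reduce_mod q (cyclotomic_prod B1) (g1 - g2)"
  have "subgroup_index sum_image (range (omega (B1 \<union> B2))) = card (range ?\<chi>)"
  proof (rule subgroup_index_eq_card_image[OF add_subgroup_range_omega])
    show "sum_image = range ?\<psi>"
      unfolding sum_image_def by auto
    show "?\<psi> u - ?\<psi> v \<in> range (omega (B1 \<union> B2)) \<longleftrightarrow> ?\<chi> u = ?\<chi> v" for u v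
      using sum_image_diff_mem_range_iff[OF gen cong] by (simp split: prod.split)
  qed
  also have "range ?\<chi> = range (reduce_mod q (cyclotomic_prod B1))"
    by (auto intro!: image_eqI[of _ _ "(_, 0)"])
  finally show ?thesis
    by (simp add: range_reduce_mod[OF lead_coeff_cyclotomic_prod1 q] card_reduced_polys[OF q])
qed

lemma omega_index_union:
  assumes q: "q > 0"
    and gen: "[:q:] = cyclotomic_prod B1 * x + cyclotomic_prod B2 * y"
    and cong: "cyclotomic_prod B2 = cyclotomic_prod B1 * a0 + smult q b0"
    and "omega_index B1 > 0" "omega_index B2 > 0"
  shows "omega_index (B1 \<union> B2) = omega_index B1 * omega_index B2 * nat q ^ degree (cyclotomic_prod B1)"
proof -
  note index_outer = index_target_sum_image
  note index_inner = index_sum_image_range[OF q gen cong]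
  have "finite (add_coset sum_image ` omega_target (B1 \<union> B2))"
    using index_outer assms(4,5) unfolding subgroup_index_def by (metis card_ge_0_finite mult_pos_pos)
  moreover have "finite (add_coset (range (omega (B1 \<union> B2))) ` sum_image)"
    using index_inner q unfolding subgroup_index_def by (metis card_ge_0_finite zero_less_nat_eq zero_less_power)
  ultimately have "omega_index (B1 \<union> B2)
      = subgroup_index (omega_target (B1 \<union> B2)) sum_image * subgroup_index sum_image (range (omega (B1 \<union> B2)))"
    unfolding omega_index_def
    by (intro subgroup_index_tower add_subgroup_omega_target add_subgroup_sum_image add_subgroup_range_omega
        range_omega_subset_sum_image sum_image_subset_target)
  then show ?thesis
    by (simp add: index_outer index_inner)
qed

end

section \<open>The closed formula\<close>

definition index_factor :: "nat \<Rightarrow> nat \<Rightarrow> nat" where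
  "index_factor p m = p ^ (((p_part p m - 1) div (p - 1)) * (m div p_part p m))"

definition index_formula :: "nat \<Rightarrow> nat" where
  "index_formula m = (\<Prod>p\<in>prime_factors m. index_factor p m)"

lemma index_formula_pos: "index_formula m > 0"
  unfolding index_formula_def index_factor_def
  by (intro prod_pos) (auto simp: in_prime_factors_iff prime_gt_0_nat)

lemma index_formula_1: "index_formula 1 = 1"
  by (simp add: index_formula_def)

lemma power_minus_one_div_eq_sum:
  fixes q :: nat
  assumes "q > 1"
  shows "(q ^ c - 1) div (q - 1) = (\<Sum>i<c. q ^ i)"
proof -
  have "int (q ^ c - 1) = int (q - 1) * int (\<Sum>i<c. q ^ i)"
    using assms power_diff_1_eq[of "int q" c] by (simp add: of_nat_diff)
  then have "q ^ c - 1 = (q - 1) * (\<Sum>i<c. q ^ i)"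
    by (simp only: of_nat_mult [symmetric] of_nat_eq_iff)
  then show ?thesis
    using assms by simp
qed

lemma index_factor_prime_power_mult:
  assumes q: "prime q" and "m > 0" "\<not> q dvd m"
  shows "index_factor q (q ^ c * m) = q ^ ((\<Sum>i<c. q ^ i) * m)"
proof -
  have "multiplicity q (q ^ c * m) = c"
    using assms by (simp add: prime_elem_multiplicity_mult_distrib multiplicity_prime_power
        not_dvd_imp_multiplicity_0)
  then have "p_part q (q ^ c * m) = q ^ c"
    by (simp add: p_part_def)
  then show ?thesis
    using power_minus_one_div_eq_sum[of q c] prime_gt_1_nat[OF q] prime_gt_0_nat[OF q]
    by (simp add: index_factor_def)
qed

lemma index_factor_coprime_mult:
  assumes p: "prime p" and "a > 0" "m > 0" "\<not> p dvd a"
  shows "index_factor p (a * m) = index_factor p m ^ a"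
proof -
  have "multiplicity p (a * m) = multiplicity p m"
    using assms by (simp add: prime_elem_multiplicity_mult_distrib not_dvd_imp_multiplicity_0)
  then have "p_part p (a * m) = p_part p m"
    by (simp add: p_part_def)
  moreover have "p_part p m dvd m"
    unfolding p_part_def by (rule multiplicity_dvd)
  ultimately have "a * m div p_part p (a * m) = a * (m div p_part p m)"
    by (simp add: div_mult_swap)
  then show ?thesis
    unfolding index_factor_def \<open>p_part p (a * m) = p_part p m\<close> by (simp add: ac_simps flip: power_mult)
qed

lemma index_formula_prime_power_mult:
  assumes q: "prime q" and m: "m > 0" and "\<not> q dvd m"
  shows "index_formula (q ^ c * m) = q ^ ((\<Sum>i<c. q ^ i) * m) * index_formula m ^ (q ^ c)"
proof (cases "c = 0")
  case False
  have "prime_factors (q ^ c * m) = insert q (prime_factors m)"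
    using False q m by (simp add: prime_factors_product prime_factors_power prime_prime_factors)
  moreover have "q \<notin> prime_factors m"
    using \<open>\<not> q dvd m\<close> by (auto simp: in_prime_factors_iff)
  moreover have "index_factor p (q ^ c * m) = index_factor p m ^ (q ^ c)" if "p \<in> prime_factors m" for p
  proof -
    have "prime p" "p \<noteq> q"
      using that \<open>q \<notin> prime_factors m\<close> by (auto simp: in_prime_factors_iff)
    then have "\<not> p dvd q ^ c"
      using q by (metis prime_dvd_power primes_dvd_imp_eq)
    then show ?thesis
      using index_factor_coprime_mult[OF \<open>prime p\<close> _ m] q by (simp add: prime_gt_0_nat)
  qed
  ultimately show ?thesis
    using index_factor_prime_power_mult[OF assms]
    by (simp add: index_formula_def prod_power_distrib)
qed simp

lemma index_formula_split:
  assumes q: "prime q" and "n' > 0" "\<not> q dvd n'"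
  shows "index_formula (q ^ Suc c * n')
    = q ^ (q ^ c * n') * index_formula (q ^ c * n') * index_formula n' ^ totient (q ^ Suc c)"
proof -
  have "q ^ Suc c = q ^ c * (1 + (q - 1))"
    using prime_gt_0_nat[OF q] by simp
  then have "q ^ Suc c = q ^ c + totient (q ^ Suc c)"
    using totient_prime_power_Suc[OF q] by (simp add: algebra_simps)
  then have "index_formula (q ^ Suc c * n')
      = q ^ ((\<Sum>i<Suc c. q ^ i) * n') * index_formula n' ^ (q ^ c + totient (q ^ Suc c))"
    using index_formula_prime_power_mult[OF assms, of "Suc c"] by simp
  also have "\<dots> = q ^ (q ^ c * n') * (q ^ ((\<Sum>i<c. q ^ i) * n') * index_formula n' ^ q ^ c)
      * index_formula n' ^ totient (q ^ Suc c)"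
    by (simp add: power_add algebra_simps)
  finally show ?thesis
    using index_formula_prime_power_mult[OF assms, of c] by simp
qed

lemma prime_dvd_decompose:
  fixes q n :: nat
  assumes q: "prime q" and "q dvd n" "n > 0"
  obtains c n' where "n = q ^ Suc c * n'" "n' > 0" "\<not> q dvd n'"
proof -
  have "n \<noteq> 0" "\<not> is_unit q"
    using assms by auto
  then obtain n' where n': "n = q ^ multiplicity q n * n'" "\<not> q dvd n'"
    using multiplicity_decompose'[of n q] by blast
  moreover have "multiplicity q n \<noteq> 0"
    using assms by (simp add: prime_elem_multiplicity_eq_zero_iff)
  moreover have "n' > 0"
    using n' \<open>n > 0\<close> by (cases "n' = 0") auto
  ultimately show ?thesis
    using that[of "multiplicity q n - 1" n'] by simp
qed

section \<open>Splitting a set of orders at a prime\<close>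

definition scaled_divisors :: "nat \<Rightarrow> nat \<Rightarrow> nat set" where
  "scaled_divisors k n = (\<lambda>e. k * e) ` {e. e dvd n}"

lemma finite_scaled_divisors: "n > 0 \<Longrightarrow> finite (scaled_divisors k n)"
  unfolding scaled_divisors_def by simp

lemma scaled_divisors_pos: "k > 0 \<Longrightarrow> n > 0 \<Longrightarrow> \<forall>d\<in>scaled_divisors k n. d > 0"
  unfolding scaled_divisors_def by (auto intro: gr0I)

lemma scaled_divisors_1: "scaled_divisors k 1 = {k}"
  unfolding scaled_divisors_def by auto

lemma scaled_divisors_one_left: "scaled_divisors 1 m = {d. d dvd m}"
  unfolding scaled_divisors_def by simp

lemma degree_cyclotomic_prod_scaled_divisors:
  assumes k: "k > 0" and n: "n > 0" and cop: "coprime k n"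
  shows "degree (cyclotomic_prod (scaled_divisors k n)) = totient k * n"
proof -
  have "inj_on (\<lambda>e. k * e) {e. e dvd n}"
    using k by (auto intro: inj_onI)
  then have "degree (cyclotomic_prod (scaled_divisors k n)) = (\<Sum>e | e dvd n. totient (k * e))"
    using degree_cyclotomic_prod[OF finite_scaled_divisors[OF n] scaled_divisors_pos[OF k n]]
    by (simp add: scaled_divisors_def sum.reindex)
  also have "\<dots> = (\<Sum>e | e dvd n. totient k * totient e)"
  proof (intro sum.cong refl totient_mult_coprime)
    fix e assume "e \<in> {e. e dvd n}"
    then obtain t where "n = e * t"
      by blast
    then show "coprime k e"
      using cop by simp
  qed
  also have "\<dots> = totient k * n"
    by (simp flip: sum_distrib_left add: totient_divisor_sum)
  finally show ?thesis .
qed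

lemma monic_dvd_same_degree_imp_eq:
  fixes A C :: "'a::idom poly"
  assumes "lead_coeff A = 1" "lead_coeff C = 1" "A dvd C" "degree A = degree C"
  shows "A = C"
proof -
  obtain c where c: "C = A * c"
    using assms(3) by blast
  then have "A \<noteq> 0" "c \<noteq> 0"
    using assms(2) by auto
  then have "degree c = 0"
    using c assms(4) by (simp add: degree_mult_eq)
  moreover have "lead_coeff c = 1"
    using assms(1,2) c by (simp add: lead_coeff_mult)
  ultimately have "c = [:1:]"
    using degree_0_id[of c] by simp
  then have "c = 1"
    by (simp add: one_pCons)
  then show ?thesis
    using c by simp
qed

lemma sum_powers_eq_of_nat_plus_multiple:
  fixes Y :: "'a::comm_ring_1"
  shows "\<exists>V. (\<Sum>j<q. Y ^ j) = of_nat q + (Y - 1) * V"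
proof -
  have "(\<Sum>j<q. Y ^ j) - of_nat q = (\<Sum>j<q. Y ^ j - 1)"
    by (simp add: sum_subtractf)
  also have "\<dots> = (Y - 1) * (\<Sum>j<q. \<Sum>i<j. Y ^ i)"
    by (simp add: power_diff_1_eq sum_distrib_left)
  finally have "(\<Sum>j<q. Y ^ j) = of_nat q + (Y - 1) * (\<Sum>j<q. \<Sum>i<j. Y ^ i)"
    by (simp add: diff_eq_eq add.commute)
  then show ?thesis
    by blast
qed

lemma sum_powers_root_of_unity:
  fixes w :: "'a::field"
  assumes "w ^ q = 1" "w \<noteq> 1"
  shows "(\<Sum>j<q. w ^ j) = 0"
  using assms by (simp add: sum_gp_strict)

locale prime_split =
  fixes k q c n' :: nat
  assumes k: "k > 0" and q: "prime q"
    and n': "n' > 0" "\<not> q dvd n'" and coprime: "coprime k (q ^ Suc c * n')"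
begin

abbreviation n :: nat where "n \<equiv> q ^ Suc c * n'"

abbreviation B :: "nat set" where "B \<equiv> scaled_divisors k n"
abbreviation B1 :: "nat set" where "B1 \<equiv> scaled_divisors k (q ^ c * n')"
abbreviation B2 :: "nat set" where "B2 \<equiv> scaled_divisors (k * q ^ Suc c) n'"

lemma q_gt_1: "q > 1"
  using q by (rule prime_gt_1_nat)

lemma n_pos: "n > 0"
  using n' q_gt_1 by simp

lemma not_q_dvd_k: "\<not> q dvd k"
proof
  assume "q dvd k"
  moreover have "q dvd n"
    by simp
  ultimately have "is_unit q"
    using coprime coprime_common_divisor by blast
  then show False
    using q not_prime_unit by blast
qed

lemma coprime_k_n_div_q: "coprime k (q ^ c * n')"
proof -
  have "coprime k q" "coprime k n'"
    using coprime by auto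
  then show ?thesis
    by simp
qed

lemma coprime_k_q_power_n': "coprime (k * q ^ Suc c) n'"
  using coprime q n'(2) by (simp add: prime_imp_coprime)

lemma dvd_n_div_q_if_not_q_power_dvd:
  assumes "e dvd n" "\<not> q ^ Suc c dvd e"
  shows "e dvd q ^ c * n'"
proof -
  obtain t where t: "n = e * t"
    using assms(1) by blast
  have "q dvd t"
  proof (rule ccontr)
    assume "\<not> q dvd t"
    then have "coprime (q ^ Suc c) t"
      using q by (simp add: prime_imp_coprime)
    moreover have "q ^ Suc c dvd e * t"
      unfolding t[symmetric] by simp
    ultimately show False
      using assms(2) by (simp add: coprime_dvd_mult_left_iff)
  qed
  then obtain s where "t = q * s"
    by blast
  then have "q * (q ^ c * n') = q * (e * s)"
    using t by (simp add: power_Suc ac_simps)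
  then show ?thesis
    using q_gt_1 by simp
qed

lemma scaled_divisors_split: "B = B1 \<union> B2"
proof (intro equalityI subsetI)
  fix d assume "d \<in> B"
  then obtain e where e: "d = k * e" "e dvd n"
    unfolding scaled_divisors_def by blast
  show "d \<in> B1 \<union> B2"
  proof (cases "q ^ Suc c dvd e")
    case True
    then obtain e' where "e = q ^ Suc c * e'"
      by blast
    moreover have "e' dvd n'"
      using e(2) q_gt_1 unfolding \<open>e = q ^ Suc c * e'\<close> by simp
    ultimately show ?thesis
      using e(1) unfolding scaled_divisors_def by (auto simp: mult.assoc)
  next
    case False
    then show ?thesis
      using e dvd_n_div_q_if_not_q_power_dvd unfolding scaled_divisors_def by blast
  qed
next
  fix d assume "d \<in> B1 \<union> B2"
  then show "d \<in> B"
  proof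
    assume "d \<in> B1"
    then obtain e where "d = k * e" "e dvd q ^ c * n'"
      unfolding scaled_divisors_def by blast
    moreover have "q ^ c * n' dvd n"
      by simp
    ultimately show "d \<in> B"
      unfolding scaled_divisors_def by (blast intro: dvd_trans)
  next
    assume "d \<in> B2"
    then obtain e where "d = k * (q ^ Suc c * e)" "e dvd n'"
      unfolding scaled_divisors_def by (auto simp: mult.assoc)
    moreover have "q ^ Suc c * e dvd n"
      using \<open>e dvd n'\<close> by simp
    ultimately show "d \<in> B"
      unfolding scaled_divisors_def by blast
  qed
qed

lemma not_q_power_mult_dvd: "\<not> q ^ Suc c * e dvd q ^ c * n'"
proof
  assume "q ^ Suc c * e dvd q ^ c * n'"
  then have "q ^ c * (q * e) dvd q ^ c * n'"
    unfolding power_Suc by (simp add: ac_simps)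
  then have "q * e dvd n'"
    using q_gt_1 by simp
  then show False
    using n'(2) by (simp add: dvd_mult_left)
qed

lemma scaled_divisors_disjoint: "B1 \<inter> B2 = {}"
  using k not_q_power_mult_dvd unfolding scaled_divisors_def by (auto simp: mult.assoc)

lemma n_div_q_pos: "q ^ c * n' > 0"
  using n'(1) q_gt_1 by simp

lemma k_q_power_pos: "k * q ^ Suc c > 0"
  using k q_gt_1 by simp

sublocale omega_split B1 B2
proof
  show "finite B1" "finite B2"
    using finite_scaled_divisors n_div_q_pos n'(1) by blast+
  show "\<forall>d\<in>B1 \<union> B2. d > 0"
    using scaled_divisors_pos[OF k n_div_q_pos] scaled_divisors_pos[OF k_q_power_pos n'(1)] by blast
  show "B1 \<inter> B2 = {}"
    by (rule scaled_divisors_disjoint)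
qed

lemma sum_powers_zeta_eq_0:
  assumes d: "d \<in> B2"
  shows "(\<Sum>j<q. (zeta d ^ (k * (q ^ c * n'))) ^ j) = 0"
proof -
  obtain e where e: "d = k * (q ^ Suc c * e)" "e dvd n'"
    using d unfolding scaled_divisors_def by (auto simp: mult.assoc)
  have "d > 0"
    using d pos2 by blast
  have "d dvd k * n"
    unfolding e(1) using e(2) by (intro mult_dvd_mono) simp_all
  then have "d dvd k * (q ^ c * n') * q"
    by (simp add: ac_simps)
  then have "(zeta d ^ (k * (q ^ c * n'))) ^ q = 1"
    using zeta_power_eq_1_iff[OF \<open>d > 0\<close>] by (simp flip: power_mult)
  moreover have "\<not> d dvd k * (q ^ c * n')"
    using e not_q_power_mult_dvd k by simp
  then have "zeta d ^ (k * (q ^ c * n')) \<noteq> 1"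
    using zeta_power_eq_1_iff[OF \<open>d > 0\<close>] by simp
  ultimately show ?thesis
    by (rule sum_powers_root_of_unity)
qed

text \<open>With \<open>N = k n/q\<close>, \<open>F\<^sub>1\<close> divides \<open>X\<^sup>N - 1\<close> and \<open>F\<^sub>2\<close> divides \<open>\<Sum>\<^sub>j\<^sub><\<^sub>q X\<^sup>N\<^sup>j \<equiv> q (mod X\<^sup>N - 1)\<close>.\<close>

lemma q_in_ideal: "\<exists>x y. [:int q:] = cyclotomic_prod B1 * x + cyclotomic_prod B2 * y"
proof -
  define N where "N = k * (q ^ c * n')"
  define S where "S = (\<Sum>j<q. monom (1::int) N ^ j)"
  have "d dvd N" if "d \<in> B1" for d
    using that unfolding N_def scaled_divisors_def by auto
  then have "\<forall>d\<in>B1. ipoly (xpow_minus_one N) (zeta d) = 0"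
    using pos1 zeta_power_eq_1_iff by simp
  then obtain c1 where c1: "xpow_minus_one N = cyclotomic_prod B1 * c1"
    using cyclotomic_prod_dvd_iff[OF finite(1) pos1] by blast
  have "\<forall>d\<in>B2. ipoly S (zeta d) = 0"
    using sum_powers_zeta_eq_0 unfolding S_def N_def by (simp add: ipoly_sum)
  then obtain c2 where c2: "S = cyclotomic_prod B2 * c2"
    using cyclotomic_prod_dvd_iff[OF finite(2) pos2] by blast
  obtain V where "S = of_nat q + (monom 1 N - 1) * V"
    unfolding S_def using sum_powers_eq_of_nat_plus_multiple by blast
  then have "[:int q:] = S - xpow_minus_one N * V"
    by (simp add: xpow_minus_one_def of_nat_poly)
  also have "\<dots> = cyclotomic_prod B1 * (- c1 * V) + cyclotomic_prod B2 * c2"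
    unfolding c1 c2 by (simp add: algebra_simps)
  finally show ?thesis
    by blast
qed

lemma ipoly_cyclotomic_prod_zeta:
  "d \<in> B1 \<Longrightarrow> ipoly (cyclotomic_prod B1) (zeta d) = 0"
  using cyclotomic_prod_dvd_iff[OF finite(1) pos1, of "cyclotomic_prod B1"] by simp

lemma B_finite_pos: "finite B" "\<forall>d\<in>B. d > 0"
  using finite_scaled_divisors[OF n_pos] scaled_divisors_pos[OF k n_pos] by blast+

text \<open>Raising \<open>\<zeta>\<^sub>d\<close> (\<open>d \<in> B\<close>) to the \<open>q\<close>-th power gives \<open>\<zeta>\<^sub>d\<^sub>/\<^sub>q\<close> with \<open>d/q \<in> B1\<close> if \<open>q | d\<close>, and a
  conjugate of \<open>\<zeta>\<^sub>d\<close> with \<open>d \<in> B1\<close> otherwise.\<close>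

lemma ipoly_cyclotomic_prod_zeta_power_q:
  assumes d: "d \<in> B"
  shows "ipoly (cyclotomic_prod B1) (zeta d ^ q) = 0"
proof -
  obtain e where e: "d = k * e" "e dvd n"
    using d unfolding scaled_divisors_def by blast
  have "d > 0"
    using d B_finite_pos(2) by blast
  show ?thesis
  proof (cases "q dvd e")
    case True
    then obtain e' where e': "e = q * e'"
      by blast
    then have "e' dvd q ^ c * n'"
      using e(2) q_gt_1 by (simp add: mult.assoc)
    then have "k * e' \<in> B1"
      unfolding scaled_divisors_def by blast
    moreover have "d = q * (k * e')"
      using e(1) e' by simp
    then have "zeta d ^ q = zeta (k * e')"
      using \<open>d > 0\<close> q_gt_1 zeta_mult_power[of q "k * e'"] by simp
    ultimately show ?thesis
      using ipoly_cyclotomic_prod_zeta by simp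
  next
    case False
    moreover have "q dvd q ^ Suc c"
      by simp
    ultimately have "\<not> q ^ Suc c dvd e"
      using dvd_trans by blast
    then have "d \<in> B1"
      using e dvd_n_div_q_if_not_q_power_dvd unfolding scaled_divisors_def by blast
    moreover have "coprime q d"
      using False not_q_dvd_k q e(1) by (simp add: prime_imp_coprime prime_dvd_mult_iff)
    then have "ipoly (cyclotomic d) (zeta d ^ q) = 0"
      using cyclotomic_root_power_coprime[OF \<open>d > 0\<close>] by simp
    ultimately show ?thesis
      using ipoly_dvd_eq_0[of "cyclotomic d" "cyclotomic_prod B1"] finite(1)
      by (simp add: cyclotomic_prod_def dvd_prodI)
  qed
qed

lemma cyclotomic_prod_eq_pcompose:
  "cyclotomic_prod B = pcompose (cyclotomic_prod B1) (monom 1 q)"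
proof -
  let ?G = "pcompose (cyclotomic_prod B1) (monom 1 q)"
  have "cyclotomic_prod B dvd ?G"
    using cyclotomic_prod_dvd_iff[OF B_finite_pos] ipoly_cyclotomic_prod_zeta_power_q
    by (simp add: ipoly_pcompose)
  moreover have "degree ?G = degree (cyclotomic_prod B)"
    using degree_cyclotomic_prod_scaled_divisors[OF k n_div_q_pos coprime_k_n_div_q]
      degree_cyclotomic_prod_scaled_divisors[OF k n_pos coprime]
    by (simp add: degree_pcompose degree_monom_eq)
  moreover have "lead_coeff ?G = 1"
    using lead_coeff_cyclotomic_prod1 q_gt_1 by (simp add: lead_coeff_comp degree_monom_eq)
  ultimately show ?thesis
    using lead_coeff_cyclotomic_prod[OF B_finite_pos] by (intro monic_dvd_same_degree_imp_eq) simp_all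
qed

lemma cyclotomic_prod_split: "cyclotomic_prod B = cyclotomic_prod B1 * cyclotomic_prod B2"
  unfolding cyclotomic_prod_def scaled_divisors_split
  by (rule prod.union_disjoint[OF finite disjoint])

lemma cyclotomic_prod_cong_mod_q:
  "\<exists>a0 b0. cyclotomic_prod B2 = cyclotomic_prod B1 * a0 + smult (int q) b0"
proof -
  let ?F1 = "cyclotomic_prod B1" and ?F2 = "cyclotomic_prod B2"
  have "\<exists>q'. q = Suc (Suc q')"
    using q_gt_1 by presburger
  then obtain q' where q': "q = Suc (Suc q')"
    by blast
  obtain r where "?F1 ^ q = pcompose ?F1 (monom 1 q) + smult (int q) r"
    using int_poly_power_prime_eq[OF q] by blast
  moreover have "pcompose ?F1 (monom 1 q) = ?F1 * ?F2"
    using cyclotomic_prod_eq_pcompose cyclotomic_prod_split by simp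
  ultimately have "?F1 * (?F1 * ?F1 ^ q' - ?F2) = smult (int q) r"
    unfolding q' by (simp add: right_diff_distrib)
  then have "\<forall>i\<ge>degree ?F1. int q dvd coeff (?F1 * (?F1 * ?F1 ^ q' - ?F2)) i"
    by simp
  then have "\<forall>i. int q dvd coeff (?F1 * ?F1 ^ q' - ?F2) i"
    by (rule dvd_coeffs_if_monic_mult[OF lead_coeff_cyclotomic_prod1])
  then obtain v where "?F1 * ?F1 ^ q' - ?F2 = smult (int q) v"
    using int_poly_eq_smult_if_dvd_coeffs by blast
  then have "?F2 = ?F1 * ?F1 ^ q' + smult (int q) (- v)"
    by (simp add: algebra_simps)
  then show ?thesis
    by blast
qed

lemma omega_index_step:
  assumes "omega_index B1 > 0" "omega_index B2 > 0"
  shows "omega_index B = omega_index B1 * omega_index B2 * q ^ (totient k * (q ^ c * n'))"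
proof -
  obtain x y where gen: "[:int q:] = cyclotomic_prod B1 * x + cyclotomic_prod B2 * y"
    using q_in_ideal by blast
  obtain a0 b0 where cong: "cyclotomic_prod B2 = cyclotomic_prod B1 * a0 + smult (int q) b0"
    using cyclotomic_prod_cong_mod_q by blast
  have "omega_index B = omega_index B1 * omega_index B2 * nat (int q) ^ degree (cyclotomic_prod B1)"
    unfolding scaled_divisors_split using q_gt_1 by (intro omega_index_union[OF _ gen cong assms]) simp
  also have "degree (cyclotomic_prod B1) = totient k * (q ^ c * n')"
    by (rule degree_cyclotomic_prod_scaled_divisors[OF k n_div_q_pos coprime_k_n_div_q])
  finally show ?thesis
    by simp
qed


lemma omega_index_eq_index_formula_power:
  assumes IH1: "omega_index B1 = index_formula (q ^ c * n') ^ totient k"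
    and IH2: "omega_index B2 = index_formula n' ^ totient (k * q ^ Suc c)"
  shows "omega_index B = index_formula n ^ totient k"
proof -
  have "coprime q k"
    using not_q_dvd_k q by (simp add: prime_imp_coprime)
  then have "totient (k * q ^ Suc c) = totient k * totient (q ^ Suc c)"
    by (simp add: coprime_commute totient_mult_coprime)
  then have IH2': "omega_index B2 = index_formula n' ^ (totient k * totient (q ^ Suc c))"
    using IH2 by simp
  have "omega_index B = omega_index B1 * omega_index B2 * q ^ (totient k * (q ^ c * n'))"
    using IH1 IH2' index_formula_pos by (intro omega_index_step) simp_all
  also have "\<dots> = (q ^ (q ^ c * n') * index_formula (q ^ c * n') * index_formula n' ^ totient (q ^ Suc c))
      ^ totient k"
    unfolding IH1 IH2' by (simp add: power_mult_distrib ac_simps flip: power_mult)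
  also have "\<dots> = index_formula n ^ totient k"
    using index_formula_split[OF q n'] by simp
  finally show ?thesis .
qed

end

theorem omega_index_scaled_divisors:
  assumes "n > 0" "k > 0" "coprime k n"
  shows "omega_index (scaled_divisors k n) = index_formula n ^ totient k"
  using assms
proof (induction n arbitrary: k rule: less_induct)
  case (less n)
  show ?case
  proof (cases "n = 1")
    case True
    have "omega_index (scaled_divisors k n) = 1"
      unfolding True scaled_divisors_1 by (rule omega_index_singleton[OF less.prems(2)])
    moreover have "index_formula n = 1"
      unfolding True by (rule index_formula_1)
    ultimately show ?thesis
      by simp
  next
    case False
    then obtain q where q: "prime q" "q dvd n"
      using prime_factor_nat by blast
    then obtain c n' where n: "n = q ^ Suc c * n'" and n': "n' > 0" "\<not> q dvd n'"
      using less.prems(1) prime_dvd_decompose by blast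
    interpret prime_split k q c n'
      using less.prems n n' q by unfold_locales simp_all
    have "q ^ c * n' < n"
      using n n_div_q_pos q_gt_1 by simp
    moreover have "n' < n"
      using n n'(1) one_less_power[OF q_gt_1, of "Suc c"] by simp
    ultimately have "omega_index B1 = index_formula (q ^ c * n') ^ totient k"
      and "omega_index B2 = index_formula n' ^ totient (k * q ^ Suc c)"
      using less.IH n_div_q_pos k coprime_k_n_div_q n'(1) k_q_power_pos coprime_k_q_power_n' by blast+
    then show ?thesis
      unfolding n by (rule omega_index_eq_index_formula_power)
  qed
qed

section \<open>The Wedderburn embedding\<close>

lemma wedderburn_target_eq: "wedderburn_target m = omega_target {d. d dvd m}"
  unfolding wedderburn_target_def omega_target_def by auto

lemma wedderburn_image_eq:
  assumes m: "m > 0"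
  shows "wedderburn_image m = range (omega {d. d dvd m})"
proof (intro equalityI subsetI)
  fix x assume "x \<in> wedderburn_image m"
  then obtain a where "x = wedderburn_map m a"
    unfolding wedderburn_image_def by blast
  also have "\<dots> = omega {d. d dvd m} (\<Sum>i<m. monom (a i) i)"
    unfolding wedderburn_map_def omega_def by (rule ext) (simp add: ipoly_sum)
  finally show "x \<in> range (omega {d. d dvd m})"
    by blast
next
  fix x assume "x \<in> range (omega {d. d dvd m})"
  then obtain g where x: "x = omega {d. d dvd m} g"
    by blast
  define r where "r = pseudo_mod g (xpow_minus_one m)"
  have monic: "lead_coeff (xpow_minus_one m) = 1"
    by (rule lead_coeff_xpow_minus_one[OF m])
  have "ipoly g (zeta d) = (\<Sum>i<m. of_int (coeff r i) * zeta d ^ i)" if "d dvd m" for d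
  proof -
    have "d > 0"
      using that m by (auto intro: gr0I)
    have "ipoly (xpow_minus_one m) (zeta d) = 0"
      using that zeta_power_eq_1_iff[OF \<open>d > 0\<close>] by simp
    then have "ipoly g (zeta d) = ipoly r (zeta d)"
      using monic_pseudo_mod(1)[OF monic, of g] unfolding r_def
      by (metis dvdE ipoly_diff ipoly_mult mult_zero_left right_minus_eq)
    also have "r = (\<Sum>i<m. monom (coeff r i) i)"
      using monic_pseudo_mod(2)[OF monic, of g] degree_xpow_minus_one[OF m] unfolding r_def
      by (intro poly_eqI) (auto simp: coeff_sum)
    finally show ?thesis
      by (simp add: ipoly_sum)
  qed
  then have "x = wedderburn_map m (coeff r)"
    unfolding x wedderburn_map_def omega_def by auto
  then show "x \<in> wedderburn_image m"
    unfolding wedderburn_image_def by blast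
qed

lemma wedderburn_index_eq: "m > 0 \<Longrightarrow> wedderburn_index m = omega_index {d. d dvd m}"
  unfolding wedderburn_index_def omega_index_def subgroup_index_def add_coset_def
  by (simp add: wedderburn_target_eq wedderburn_image_eq plus_fun_def)

theorem corollary5p8:
  fixes m :: nat
  assumes "m \<ge> 1"
  shows "wedderburn_index m =
    (\<Prod>p\<in>prime_factors m. p ^ (((p_part p m - 1) div (p - 1)) * (m div p_part p m)))"
proof -
  have m: "m > 0"
    using assms by simp
  have "wedderburn_index m = omega_index (scaled_divisors 1 m)"
    unfolding wedderburn_index_eq[OF m] scaled_divisors_one_left ..
  also have "\<dots> = index_formula m"
    using omega_index_scaled_divisors[OF m] by simp
  finally show ?thesis
    unfolding index_formula_def index_factor_def .
qed

end
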